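(* Let $\mathbf{X}\sim N(\boldsymbol{\mu},\boldsymbol{\Sigma})$ on $\mathbb{R}^d$ with $\boldsymbol{\Sigma}$ symmetric positive definite having maximum and minimum eigenvalues $\lambda_{\max},\lambda_{\min}$, and let $c\in\mathbb{R}$. Suppose $\mathbf{r},\hat{\mathbf{r}}$ are unit vectors with $\|\mathbf{r}-\hat{\mathbf{r}}\|_2\le\varepsilon_1$. Then $\Pr[\mathrm{pos}(\mathbf{r}^{\mathsf T}\mathbf{X}+c)\neq\mathrm{pos}(\hat{\mathbf{r}}^{\mathsf T}\mathbf{X}+c)]\le\varepsilon$, where $\varepsilon=\varepsilon_1\big(c_0\sqrt{\lambda_{\max}/\lambda_{\min}}+c_1\|\boldsymbol{\mu}\|_2/\sqrt{\lambda_{\min}}\big)$ for some absolute constants $c_0,c_1>0$.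
   Context: $\mathrm{pos}(a):=1$ if $a>0$ and $0$ otherwise. *)

theory Defs
  imports "HOL-Probability.Probability"
begin

text \<open>Vectors in R^d are functions nat => real (only coordinates i < d matter);
  d x d matrices are functions nat => nat => real (only entries i,j < d matter).
  The dimension d is an explicit natural number so that the constants c0, c1
  can be chosen independently of d.\<close>

definition pos :: "real \<Rightarrow> nat" where
  "pos a = (if a > 0 then 1 else 0)"

definition dot :: "nat \<Rightarrow> (nat \<Rightarrow> real) \<Rightarrow> (nat \<Rightarrow> real) \<Rightarrow> real" where
  "dot d x y = (\<Sum>i<d. x i * y i)"

definition vnorm :: "nat \<Rightarrow> (nat \<Rightarrow> real) \<Rightarrow> real" where
  "vnorm d x = sqrt (dot d x x)"

definition mat_vec :: "nat \<Rightarrow> (nat \<Rightarrow> nat \<Rightarrow> real) \<Rightarrow> (nat \<Rightarrow> real) \<Rightarrow> (nat \<Rightarrow> real)" where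
  "mat_vec d A x = (\<lambda>i. \<Sum>j<d. A i j * x j)"

definition symmetric_mat :: "nat \<Rightarrow> (nat \<Rightarrow> nat \<Rightarrow> real) \<Rightarrow> bool" where
  "symmetric_mat d A \<longleftrightarrow> (\<forall>i<d. \<forall>j<d. A i j = A j i)"

definition pos_def_mat :: "nat \<Rightarrow> (nat \<Rightarrow> nat \<Rightarrow> real) \<Rightarrow> bool" where
  "pos_def_mat d A \<longleftrightarrow> (\<forall>x. (\<exists>i<d. x i \<noteq> 0) \<longrightarrow> dot d x (mat_vec d A x) > 0)"

definition det_mat :: "nat \<Rightarrow> (nat \<Rightarrow> nat \<Rightarrow> real) \<Rightarrow> real" where
  "det_mat d A = (\<Sum>p\<in>{p. p permutes {..<d}}. of_int (sign p) * (\<Prod>i<d. A i (p i)))"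

definition inv_mat :: "nat \<Rightarrow> (nat \<Rightarrow> nat \<Rightarrow> real) \<Rightarrow> (nat \<Rightarrow> nat \<Rightarrow> real)" where
  "inv_mat d A = (SOME B. \<forall>i<d. \<forall>j<d. (\<Sum>k<d. A i k * B k j) = (if i = j then 1 else 0))"

definition eigenvalues_mat :: "nat \<Rightarrow> (nat \<Rightarrow> nat \<Rightarrow> real) \<Rightarrow> real set" where
  "eigenvalues_mat d A = {l. \<exists>v. (\<exists>i<d. v i \<noteq> 0) \<and> (\<forall>i<d. mat_vec d A v i = l * v i)}"

definition lambda_max :: "nat \<Rightarrow> (nat \<Rightarrow> nat \<Rightarrow> real) \<Rightarrow> real" where
  "lambda_max d A = Max (eigenvalues_mat d A)"

definition lambda_min :: "nat \<Rightarrow> (nat \<Rightarrow> nat \<Rightarrow> real) \<Rightarrow> real" where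
  "lambda_min d A = Min (eigenvalues_mat d A)"

definition lebesgue_d :: "nat \<Rightarrow> (nat \<Rightarrow> real) measure" where
  "lebesgue_d d = PiM {..<d} (\<lambda>_. lborel)"

definition gauss_density :: "nat \<Rightarrow> (nat \<Rightarrow> real) \<Rightarrow> (nat \<Rightarrow> nat \<Rightarrow> real) \<Rightarrow> (nat \<Rightarrow> real) \<Rightarrow> real" where
  "gauss_density d \<mu> \<Sigma> x =
     exp (- (1/2) * dot d (\<lambda>i. x i - \<mu> i) (mat_vec d (inv_mat d \<Sigma>) (\<lambda>i. x i - \<mu> i)))
     / sqrt ((2 * pi) ^ d * det_mat d \<Sigma>)"

definition gaussian :: "nat \<Rightarrow> (nat \<Rightarrow> real) \<Rightarrow> (nat \<Rightarrow> nat \<Rightarrow> real) \<Rightarrow> (nat \<Rightarrow> real) measure" where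
  "gaussian d \<mu> \<Sigma> = density (lebesgue_d d) (\<lambda>x. ennreal (gauss_density d \<mu> \<Sigma> x))"

end

theory Submission
  imports Defs "Jordan_Normal_Form.Determinant" "Jordan_Normal_Form.Char_Poly"
begin

(* Write v = r - rh = beta r + w with w orthogonal to r in the inner product of Sigma. The two
   signs can only differ when |r'X + c| <= |v'X| = |beta U + W| with U = r'X and W = w'X.
   Since U and W are uncorrelated jointly Gaussian, they are independent normals; conditioning on
   W, the event confines U to a window whose normal mass is O(|beta| + (|E v'X| + sd W) / sd U).
   Finally |beta| <= eps1 sqrt (lambda_max / lambda_min), sd W <= eps1 sqrt lambda_max,
   sd U >= sqrt lambda_min and |E v'X| <= eps1 |mu|.
   Independence comes from a congruence M Sigma M' that is diagonal and has r and w as rows of M: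
   M is built from elementary matrices, for which the linear change of variables on the product
   Lebesgue measure reduces to one-dimensional substitutions and translations. *)

definition mat_of :: "nat \<Rightarrow> (nat \<Rightarrow> nat \<Rightarrow> real) \<Rightarrow> real Matrix.mat" where
  "mat_of d A = Matrix.mat d d (\<lambda>(i,j). A i j)"
definition vec_of :: "nat \<Rightarrow> (nat \<Rightarrow> real) \<Rightarrow> real Matrix.vec" where
  "vec_of d x = Matrix.vec d x"
definition mat_mul :: "nat \<Rightarrow> (nat \<Rightarrow> nat \<Rightarrow> real) \<Rightarrow> (nat \<Rightarrow> nat \<Rightarrow> real) \<Rightarrow> (nat \<Rightarrow> nat \<Rightarrow> real)" where
  "mat_mul d A B = (\<lambda>i j. \<Sum>k<d. A i k * B k j)"
definition mat_tr :: "(nat \<Rightarrow> nat \<Rightarrow> real) \<Rightarrow> (nat \<Rightarrow> nat \<Rightarrow> real)" where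
  "mat_tr A = (\<lambda>i j. A j i)"
definition id_mat :: "nat \<Rightarrow> nat \<Rightarrow> real" where
  "id_mat = (\<lambda>i j. if i = j then 1 else 0)"

lemma mult_carrier_mat_square[simp]: "A \<in> carrier_mat d d \<Longrightarrow> B \<in> carrier_mat d d \<Longrightarrow> A * B \<in> carrier_mat d d"
  by (rule mult_carrier_mat)

lemma mat_of_carrier[simp]: "mat_of d A \<in> carrier_mat d d"
  by (simp add: mat_of_def)
lemma vec_of_carrier[simp]: "vec_of d x \<in> carrier_vec d"
  by (simp add: vec_of_def)
lemma mat_of_index[simp]: "i < d \<Longrightarrow> j < d \<Longrightarrow> mat_of d A $$ (i,j) = A i j"
  by (simp add: mat_of_def)
lemma vec_of_index[simp]: "i < d \<Longrightarrow> vec_of d x $ i = x i"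
  by (simp add: vec_of_def)
lemma dim_mat_of[simp]: "dim_row (mat_of d A) = d" "dim_col (mat_of d A) = d"
  by (auto simp: mat_of_def)
lemma dim_vec_of[simp]: "dim_vec (vec_of d x) = d"
  by (simp add: vec_of_def)

lemma mat_of_eq_iff: "mat_of d A = mat_of d B \<longleftrightarrow> (\<forall>i<d. \<forall>j<d. A i j = B i j)"
  by (auto simp: mat_of_def Matrix.mat_eq_iff)

lemma vec_of_eq_iff: "vec_of d x = vec_of d y \<longleftrightarrow> (\<forall>i<d. x i = y i)"
  by (auto simp: vec_of_def Matrix.vec_eq_iff)

lemma dot_vec_of: "dot d x y = vec_of d x \<bullet> vec_of d y"
  by (simp add: dot_def scalar_prod_def atLeast0LessThan)

lemma mat_vec_vec_of: "vec_of d (mat_vec d A x) = mat_of d A *\<^sub>v vec_of d x"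
  by (rule eq_vecI) (auto simp: mat_vec_def scalar_prod_def atLeast0LessThan Matrix.row_def)

lemma mat_of_mat_mul: "mat_of d (mat_mul d A B) = mat_of d A * mat_of d B"
  by (rule eq_matI) (auto simp: mat_mul_def scalar_prod_def atLeast0LessThan Matrix.row_def Matrix.col_def)

lemma mat_of_mat_tr: "mat_of d (mat_tr A) = transpose_mat (mat_of d A)"
  by (rule eq_matI) (auto simp: mat_tr_def)

lemma mat_of_id_mat: "mat_of d id_mat = 1\<^sub>m d"
  by (rule eq_matI) (auto simp: id_mat_def)

lemma det_mat_mat_of: "det_mat d A = Determinant.det (mat_of d A)"
  by (simp add: det_mat_def Determinant.det_def atLeast0LessThan)

lemma det_mat_mat_mul: "det_mat d (mat_mul d A B) = det_mat d A * det_mat d B"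
  unfolding det_mat_mat_of mat_of_mat_mul by (rule det_mult) auto

lemma det_id_mat: "det_mat d id_mat = 1"
  unfolding det_mat_mat_of mat_of_id_mat by simp

lemma mat_of_invertible:
  assumes "Determinant.det (mat_of d A) \<noteq> 0"
  shows "\<exists>B \<in> carrier_mat d d. mat_of d A * B = 1\<^sub>m d \<and> B * mat_of d A = 1\<^sub>m d"
  using det_non_zero_imp_unit[OF mat_of_carrier assms, of "()"]
  by (auto simp: Units_def ring_mat_def)

lemma inv_mat_mat_of:
  assumes "Determinant.det (mat_of d A) \<noteq> 0"
  shows "mat_of d A * mat_of d (inv_mat d A) = 1\<^sub>m d" "mat_of d (inv_mat d A) * mat_of d A = 1\<^sub>m d"
proof -
  obtain B where B: "B \<in> carrier_mat d d" "mat_of d A * B = 1\<^sub>m d"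
    using mat_of_invertible[OF assms] by blast
  define Bf where "Bf = (\<lambda>i j. B $$ (i,j))"
  have "mat_of d Bf = B" using B(1) by (auto simp: Bf_def mat_of_def)
  then have "mat_of d (mat_mul d A Bf) = mat_of d id_mat" using B(2) by (simp add: mat_of_mat_mul mat_of_id_mat)
  then have "\<forall>i<d. \<forall>j<d. (\<Sum>k<d. A i k * Bf k j) = (if i = j then 1 else 0)"
    unfolding mat_of_eq_iff by (simp add: mat_mul_def id_mat_def)
  then have "\<forall>i<d. \<forall>j<d. (\<Sum>k<d. A i k * inv_mat d A k j) = (if i = j then 1 else 0)"
    unfolding inv_mat_def by (rule someI[of _ Bf])
  then have "mat_of d (mat_mul d A (inv_mat d A)) = mat_of d id_mat"
    unfolding mat_of_eq_iff by (simp add: mat_mul_def id_mat_def)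
  then show 1: "mat_of d A * mat_of d (inv_mat d A) = 1\<^sub>m d" by (simp add: mat_of_mat_mul mat_of_id_mat)
  show "mat_of d (inv_mat d A) * mat_of d A = 1\<^sub>m d"
    by (rule mat_mult_left_right_inverse[OF mat_of_carrier mat_of_carrier 1])
qed

lemma singular_mat_of_kernel:
  assumes "Determinant.det (mat_of d A) = 0"
  shows "\<exists>v. (\<exists>i<d. v i \<noteq> 0) \<and> (\<forall>i<d. mat_vec d A v i = 0)"
proof -
  obtain u where u: "u \<in> carrier_vec d" "u \<noteq> 0\<^sub>v d" "mat_of d A *\<^sub>v u = 0\<^sub>v d"
    using det_0_iff_vec_prod_zero[OF mat_of_carrier] assms by blast
  define v where "v = (\<lambda>i. u $ i)"
  have u_eq: "vec_of d v = u" using u(1) by (intro eq_vecI) (auto simp: v_def)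
  have "\<exists>i<d. v i \<noteq> 0"
  proof (rule ccontr)
    assume "\<not> ?thesis"
    then have "u = 0\<^sub>v d" using u(1) by (intro eq_vecI) (auto simp: v_def)
    then show False using u(2) by simp
  qed
  moreover have "vec_of d (mat_vec d A v) = vec_of d (\<lambda>_. 0)"
    using u(3) unfolding mat_vec_vec_of u_eq by (intro eq_vecI) auto
  ultimately show ?thesis unfolding vec_of_eq_iff by blast
qed

definition bilin :: "nat \<Rightarrow> (nat \<Rightarrow> nat \<Rightarrow> real) \<Rightarrow> (nat \<Rightarrow> real) \<Rightarrow> (nat \<Rightarrow> real) \<Rightarrow> real" where
  "bilin d A x y = dot d x (mat_vec d A y)"
definition sqnorm :: "nat \<Rightarrow> (nat \<Rightarrow> real) \<Rightarrow> real" where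
  "sqnorm d x = (\<Sum>i<d. (x i)^2)"

lemma bilin_expand: "bilin d A x y = (\<Sum>i<d. \<Sum>j<d. x i * A i j * y j)"
  by (simp add: bilin_def dot_def mat_vec_def sum_distrib_left mult.assoc)

lemma sqnorm_nonneg[simp]: "sqnorm d x \<ge> 0"
  by (simp add: sqnorm_def sum_nonneg)

lemma vnorm_sqnorm: "vnorm d x = sqrt (sqnorm d x)"
  by (simp add: vnorm_def dot_def sqnorm_def power2_eq_square)

lemma dot_self_sqnorm: "dot d x x = sqnorm d x"
  by (simp add: dot_def sqnorm_def power2_eq_square)

lemma dot_cong: "(\<And>i. i < d \<Longrightarrow> x i = x' i) \<Longrightarrow> (\<And>i. i < d \<Longrightarrow> y i = y' i) \<Longrightarrow> dot d x y = dot d x' y'"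
  unfolding dot_def by (intro sum.cong refl) auto

lemma dot_diff_left: "dot d (\<lambda>i. x i - y i) z = dot d x z - dot d y z"
  by (simp add: dot_def algebra_simps sum_subtractf)

lemma bilin_lin_left: "bilin d A (\<lambda>i. a * x i + b * y i) z = a * bilin d A x z + b * bilin d A y z"
  by (simp add: bilin_expand algebra_simps sum.distrib sum_distrib_left)

lemma bilin_lin_right: "bilin d A z (\<lambda>i. a * x i + b * y i) = a * bilin d A z x + b * bilin d A z y"
  by (simp add: bilin_expand algebra_simps sum.distrib sum_distrib_left)

lemma bilin_sym: "symmetric_mat d A \<Longrightarrow> bilin d A x y = bilin d A y x"
  unfolding bilin_expand symmetric_mat_def
  by (subst sum.swap) (auto intro!: sum.cong simp: algebra_simps)

lemma bilin_cong: "(\<And>i. i < d \<Longrightarrow> x i = x' i) \<Longrightarrow> (\<And>i. i < d \<Longrightarrow> y i = y' i) \<Longrightarrow> bilin d A x y = bilin d A x' y'"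
  unfolding bilin_expand by (intro sum.cong refl) auto

lemma sqnorm_zero_iff: "sqnorm d x = 0 \<longleftrightarrow> (\<forall>i<d. x i = 0)"
  unfolding sqnorm_def by (subst sum_nonneg_eq_0_iff) auto

lemma sqnorm_pos_iff: "sqnorm d x > 0 \<longleftrightarrow> (\<exists>i<d. x i \<noteq> 0)"
  using sqnorm_zero_iff[of d x] sqnorm_nonneg[of d x] unfolding less_le by auto

lemma abs_coord_le_1: "sqnorm d x = 1 \<Longrightarrow> i < d \<Longrightarrow> \<bar>x i\<bar> \<le> 1"
  using member_le_sum[of i "{..<d}" "\<lambda>i. (x i)^2"] by (simp add: sqnorm_def abs_square_le_1)

lemma bilin_zero_left: "(\<forall>i<d. x i = 0) \<Longrightarrow> bilin d A x y = 0"
  by (simp add: bilin_expand)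

lemma bilin_eigenvector:
  assumes "\<forall>i<d. mat_vec d A v i = l * v i"
  shows "bilin d A v v = l * sqnorm d v"
proof -
  have "bilin d A v v = dot d v (\<lambda>i. l * v i)" unfolding bilin_def using assms by (intro dot_cong) auto
  then show ?thesis by (simp add: dot_def sqnorm_def sum_distrib_left power2_eq_square algebra_simps)
qed

lemma mat_vec_shift:
  assumes "i < d"
  shows "mat_vec d (\<lambda>i j. A i j - m * id_mat i j) x i = mat_vec d A x i - m * x i"
proof -
  have "(\<Sum>j<d. m * id_mat i j * x j) = (\<Sum>j<d. if i = j then m * x j else 0)"
    by (rule sum.cong) (auto simp: id_mat_def)
  then show ?thesis using assms by (simp add: mat_vec_def algebra_simps sum_subtractf)
qed

lemma sum_id_mat_left: "i < d \<Longrightarrow> (\<Sum>j<d. id_mat i j * f j) = f i"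
proof -
  have "(\<Sum>j<d. id_mat i j * f j) = (\<Sum>j<d. if j = i then f j else 0)"
    by (rule sum.cong) (auto simp: id_mat_def)
  then show "i < d \<Longrightarrow> ?thesis" by simp
qed

lemma mat_vec_id_mat: "i < d \<Longrightarrow> mat_vec d id_mat y i = y i"
  by (simp add: mat_vec_def sum_id_mat_left)

lemma bilin_shift: "bilin d (\<lambda>i j. A i j - m * id_mat i j) x y = bilin d A x y - m * dot d x y"
proof -
  have "bilin d (\<lambda>i j. A i j - m * id_mat i j) x y = dot d x (\<lambda>i. mat_vec d A y i - m * y i)"
    unfolding bilin_def by (intro dot_cong) (auto simp: mat_vec_shift)
  then show ?thesis by (simp add: bilin_def dot_def algebra_simps sum_subtractf sum_distrib_left)
qed

lemma bilin_id_mat: "bilin d id_mat x y = dot d x y"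
  unfolding bilin_def by (intro dot_cong) (auto simp: mat_vec_id_mat)

lemma mat_vec_unit: "j < d \<Longrightarrow> mat_vec d S (id_mat j) = (\<lambda>k. S k j)"
  using sum_id_mat_left[of j d "S _"] by (simp add: mat_vec_def id_mat_def mult.commute eq_commute)

lemma dot_unit: "i < d \<Longrightarrow> dot d (id_mat i) v = v i"
  by (simp add: dot_def sum_id_mat_left)

lemma bilin_unit: "i < d \<Longrightarrow> j < d \<Longrightarrow> bilin d S (id_mat i) (id_mat j) = S i j"
  unfolding bilin_def by (simp add: mat_vec_unit dot_unit)

lemma quadratic_nonneg_discriminant:
  fixes a b c :: real
  assumes "\<And>t. a + 2 * b * t + c * t^2 \<ge> 0" "c \<ge> 0"
  shows "b^2 \<le> a * c"
proof (cases "c = 0")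
  case True
  show ?thesis
  proof (rule ccontr)
    assume "\<not> ?thesis"
    then have "b \<noteq> 0" using True by auto
    have "a + 2 * b * (- (a + 1) / (2 * b)) + c * (- (a + 1) / (2 * b))^2 \<ge> 0" by (rule assms(1))
    then show False using True \<open>b \<noteq> 0\<close> by (simp add: field_simps)
  qed
next
  case False
  then have c: "c > 0" using assms(2) by auto
  have "a + 2 * b * (- b / c) + c * (- b / c)^2 \<ge> 0" by (rule assms(1))
  then have "a - b^2 / c \<ge> 0" using c by (simp add: field_simps power2_eq_square)
  then show ?thesis using c by (simp add: field_simps)
qed

lemma bilin_cauchy_schwarz:
  assumes sym: "symmetric_mat d A" and psd: "\<And>z. bilin d A z z \<ge> 0"
  shows "(bilin d A x y)^2 \<le> bilin d A x x * bilin d A y y"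
proof -
  have "bilin d A x x + 2 * bilin d A x y * t + bilin d A y y * t^2 \<ge> 0" for t
  proof -
    have "bilin d A (\<lambda>i. 1 * x i + t * y i) (\<lambda>i. 1 * x i + t * y i) \<ge> 0" by (rule psd)
    then show ?thesis
      unfolding bilin_lin_left bilin_lin_right using bilin_sym[OF sym, of x y]
      by (simp add: algebra_simps power2_eq_square)
  qed
  from quadratic_nonneg_discriminant[OF this psd] show ?thesis by simp
qed

lemma dot_cauchy_schwarz: "\<bar>dot d x y\<bar> \<le> vnorm d x * vnorm d y"
proof -
  have sym: "symmetric_mat d id_mat" by (auto simp: symmetric_mat_def id_mat_def)
  have "(dot d x y)^2 \<le> sqnorm d x * sqnorm d y"
    using bilin_cauchy_schwarz[OF sym, of x y]
    unfolding bilin_id_mat dot_self_sqnorm by simp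
  then have "sqrt ((dot d x y)^2) \<le> sqrt (sqnorm d x * sqnorm d y)" by (rule real_sqrt_le_mono)
  then show ?thesis unfolding vnorm_sqnorm by (simp add: real_sqrt_mult)
qed

lemma pos_def_bilin_pos: "pos_def_mat d S \<Longrightarrow> \<exists>i<d. x i \<noteq> 0 \<Longrightarrow> bilin d S x x > 0"
  unfolding pos_def_mat_def bilin_def by auto

lemma pos_def_bilin_nonneg: "pos_def_mat d S \<Longrightarrow> bilin d S z z \<ge> 0"
  using pos_def_bilin_pos[of d S z] bilin_zero_left[of d z] by force

lemma pos_def_diag_pos: "pos_def_mat d S \<Longrightarrow> p < d \<Longrightarrow> S p p > 0"
  using pos_def_bilin_pos[of d S "id_mat p"] bilin_unit[of p d p S] by (auto simp: id_mat_def)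

lemma pos_def_det_nonzero: "pos_def_mat d S \<Longrightarrow> Determinant.det (mat_of d S) \<noteq> 0"
proof
  assume pd: "pos_def_mat d S" and "Determinant.det (mat_of d S) = 0"
  then obtain v where v: "\<exists>i<d. v i \<noteq> 0" "\<forall>i<d. mat_vec d S v i = 0"
    using singular_mat_of_kernel by blast
  have "bilin d S v v = 0" using bilin_eigenvector[of d S v 0] v(2) by simp
  then show False using pos_def_bilin_pos[OF pd v(1)] by simp
qed

section \<open>Extreme eigenvalues as extreme values of the Rayleigh quotient\<close>

definition rayleigh_set :: "nat \<Rightarrow> (nat \<Rightarrow> nat \<Rightarrow> real) \<Rightarrow> real set" where
  "rayleigh_set d A = {bilin d A x x | x. sqnorm d x = 1}"

lemma finite_eigenvalues_mat: "finite (eigenvalues_mat d A)"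
proof -
  have "eigenvalues_mat d A \<subseteq> {k. poly (char_poly (mat_of d A)) k = 0}"
  proof
    fix l assume "l \<in> eigenvalues_mat d A"
    then obtain v where v: "\<exists>i<d. v i \<noteq> 0" "\<forall>i<d. mat_vec d A v i = l * v i"
      unfolding eigenvalues_mat_def by auto
    have "vec_of d v \<noteq> 0\<^sub>v d" using v(1) by (auto simp: vec_of_def Matrix.vec_eq_iff)
    moreover have "mat_of d A *\<^sub>v vec_of d v = l \<cdot>\<^sub>v vec_of d v"
      unfolding mat_vec_vec_of[symmetric] using v(2) by (intro eq_vecI) auto
    ultimately have "eigenvalue (mat_of d A) l"
      unfolding eigenvalue_def eigenvector_def by (intro exI[of _ "vec_of d v"]) auto
    then show "l \<in> {k. poly (char_poly (mat_of d A)) k = 0}"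
      using eigenvalue_root_char_poly[OF mat_of_carrier] by auto
  qed
  moreover have "char_poly (mat_of d A) \<noteq> 0"
    using degree_monic_char_poly[OF mat_of_carrier[of d A]] by auto
  ultimately show ?thesis using poly_roots_finite finite_subset by blast
qed

lemma unit_vector_exists: "d \<ge> 1 \<Longrightarrow> \<exists>x. sqnorm d x = 1"
  using dot_unit[of 0 d "id_mat 0"] dot_self_sqnorm[of d "id_mat 0"] by (auto simp: id_mat_def)

lemma rayleigh_set_nonempty: "d \<ge> 1 \<Longrightarrow> rayleigh_set d A \<noteq> {}"
  using unit_vector_exists unfolding rayleigh_set_def by blast

lemma rayleigh_set_bdd_below: "bdd_below (rayleigh_set d A)"
proof -
  have "- (\<Sum>i<d. \<Sum>j<d. \<bar>A i j\<bar>) \<le> bilin d A x x" if x: "sqnorm d x = 1" for x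
  proof -
    have "- (\<Sum>i<d. \<Sum>j<d. \<bar>A i j\<bar>) = (\<Sum>i<d. \<Sum>j<d. - \<bar>A i j\<bar>)" by (simp add: sum_negf)
    also have "\<dots> \<le> (\<Sum>i<d. \<Sum>j<d. x i * A i j * x j)"
    proof (intro sum_mono)
      fix i j assume i: "i \<in> {..<d}" and j: "j \<in> {..<d}"
      have "\<bar>x i * A i j * x j\<bar> = \<bar>x i\<bar> * \<bar>A i j\<bar> * \<bar>x j\<bar>" by (simp add: abs_mult)
      also have "\<dots> \<le> 1 * \<bar>A i j\<bar> * 1"
        using abs_coord_le_1[OF x] i j by (intro mult_mono) auto
      finally show "- \<bar>A i j\<bar> \<le> x i * A i j * x j" by linarith
    qed
    finally show ?thesis by (simp add: bilin_expand)
  qed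
  then show ?thesis unfolding rayleigh_set_def bdd_below_def by blast
qed

lemma bilin_ge_Inf_rayleigh: "bilin d A x x \<ge> Inf (rayleigh_set d A) * sqnorm d x"
proof (cases "sqnorm d x = 0")
  case True
  then show ?thesis using sqnorm_zero_iff bilin_zero_left by (metis mult_zero_right order_refl)
next
  case False
  then have s: "sqnorm d x > 0" using sqnorm_nonneg[of d x] by linarith
  define y where "y = (\<lambda>i. x i / sqrt (sqnorm d x))"
  have "sqnorm d y = 1" using s
    by (simp add: y_def sqnorm_def power_divide sum_divide_distrib[symmetric])
  then have "bilin d A y y \<in> rayleigh_set d A" unfolding rayleigh_set_def by auto
  then have "Inf (rayleigh_set d A) \<le> bilin d A y y" by (rule cInf_lower[OF _ rayleigh_set_bdd_below])
  also have "bilin d A y y = bilin d A x x / sqnorm d x"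
    unfolding bilin_expand y_def using s
    by (simp add: sum_divide_distrib[symmetric] field_simps real_sqrt_mult[symmetric])
  finally show ?thesis using s by (simp add: field_simps)
qed

lemma dot_mat_vec_le_sum_abs:
  assumes x: "sqnorm d x = 1"
  shows "dot d (\<lambda>i. \<Sum>j<d. B i j * x j) x \<le> (\<Sum>i<d. \<Sum>j<d. \<bar>B i j\<bar>)"
proof -
  have "dot d (\<lambda>i. \<Sum>j<d. B i j * x j) x \<le> (\<Sum>i<d. \<bar>(\<Sum>j<d. B i j * x j) * x i\<bar>)"
    unfolding dot_def by (rule order_trans[OF abs_ge_self sum_abs])
  also have "\<dots> \<le> (\<Sum>i<d. \<Sum>j<d. \<bar>B i j\<bar>)"
  proof (rule sum_mono)
    fix i assume "i \<in> {..<d}"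
    then have "\<bar>(\<Sum>j<d. B i j * x j) * x i\<bar> \<le> \<bar>\<Sum>j<d. B i j * x j\<bar>"
      using abs_coord_le_1[OF x] by (simp add: abs_mult mult_left_le)
    also have "\<dots> \<le> (\<Sum>j<d. \<bar>B i j * x j\<bar>)" by (rule sum_abs)
    also have "\<dots> \<le> (\<Sum>j<d. \<bar>B i j\<bar>)"
      using abs_coord_le_1[OF x] by (intro sum_mono) (simp add: abs_mult mult_left_le)
    finally show "\<bar>(\<Sum>j<d. B i j * x j) * x i\<bar> \<le> (\<Sum>j<d. \<bar>B i j\<bar>)" .
  qed
  finally show ?thesis .
qed

(* With y = N^-1 x, Cauchy-Schwarz for N gives 1 = (x'Ny)^2 <= (x'Nx) (y'Ny) = (x'Nx) (y'x). *)
lemma invertible_psd_coercive: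
  assumes d: "d \<ge> 1" and sym: "symmetric_mat d N" and psd: "\<And>z. bilin d N z z \<ge> 0"
    and inv: "Determinant.det (mat_of d N) \<noteq> 0"
  shows "\<exists>K>0. \<forall>x. sqnorm d x = 1 \<longrightarrow> 1 \<le> K * bilin d N x x"
proof -
  obtain Bi where Bi: "Bi \<in> carrier_mat d d" "mat_of d N * Bi = 1\<^sub>m d"
    using mat_of_invertible[OF inv] by blast
  define K where "K = (\<Sum>i<d. \<Sum>j<d. \<bar>Bi $$ (i,j)\<bar>)"
  have low: "1 \<le> K * bilin d N x x" if x: "sqnorm d x = 1" for x
  proof -
    define y where "y = (\<lambda>i. \<Sum>j<d. Bi $$ (i,j) * x j)"
    have "vec_of d y = Bi *\<^sub>v vec_of d x"
      using Bi(1) by (intro eq_vecI) (auto simp: y_def scalar_prod_def atLeast0LessThan Matrix.row_def)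
    then have "vec_of d (mat_vec d N y) = vec_of d x"
      unfolding mat_vec_vec_of using Bi by (simp add: assoc_mult_mat_vec[symmetric, of _ d d _ d])
    then have Ny: "\<And>i. i < d \<Longrightarrow> mat_vec d N y i = x i" unfolding vec_of_eq_iff by auto
    have xy: "bilin d N x y = 1" unfolding bilin_def
      using dot_cong[of d x x "mat_vec d N y" x] Ny x by (simp add: dot_self_sqnorm)
    have "bilin d N y y = dot d y x" unfolding bilin_def
      using dot_cong[of d y y "mat_vec d N y" x] Ny by simp
    also have "\<dots> \<le> K" unfolding K_def y_def by (rule dot_mat_vec_le_sum_abs[OF x])
    finally have yK: "bilin d N y y \<le> K" .
    have "1 \<le> bilin d N x x * bilin d N y y"
      using bilin_cauchy_schwarz[OF sym psd, of x y] unfolding xy by simp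
    also have "\<dots> \<le> bilin d N x x * K" using yK psd[of x] by (rule mult_left_mono)
    finally show ?thesis by (simp add: mult.commute)
  qed
  obtain x where "sqnorm d x = 1" using unit_vector_exists[OF d] by blast
  then have 1: "1 \<le> K * bilin d N x x" by (rule low)
  have "K > 0"
  proof (rule ccontr)
    assume "\<not> K > 0"
    then have "K * bilin d N x x \<le> 0" using psd[of x] by (simp add: mult_nonpos_nonneg)
    then show False using 1 by simp
  qed
  with low show ?thesis by blast
qed

lemma Inf_rayleigh_eigenvalue:
  assumes d: "d \<ge> 1" and sym: "symmetric_mat d A"
  shows "Inf (rayleigh_set d A) \<in> eigenvalues_mat d A"
proof -
  define m where "m = Inf (rayleigh_set d A)"
  define N where "N = (\<lambda>i j. A i j - m * id_mat i j)"
  have symN: "symmetric_mat d N" using sym by (auto simp: symmetric_mat_def id_mat_def N_def)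
  have bilinN: "bilin d N x x = bilin d A x x - m * sqnorm d x" for x
    unfolding N_def bilin_shift dot_self_sqnorm ..
  have psd: "bilin d N z z \<ge> 0" for z
    using bilin_ge_Inf_rayleigh[of d A z] unfolding bilinN m_def by simp
  have "Determinant.det (mat_of d N) = 0"
  proof (rule ccontr)
    assume "Determinant.det (mat_of d N) \<noteq> 0"
    then obtain K where K: "K > 0" "\<And>x. sqnorm d x = 1 \<Longrightarrow> 1 \<le> K * bilin d N x x"
      using invertible_psd_coercive[OF d symN psd] by blast
    have "m + 1 / K \<le> bilin d A x x" if "sqnorm d x = 1" for x
      using K(2)[OF that] K(1) unfolding bilinN that by (simp add: field_simps)
    then have "m + 1 / K \<le> m"
      unfolding m_def by (intro cInf_greatest[OF rayleigh_set_nonempty[OF d]]) (auto simp: rayleigh_set_def)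
    then show False using K(1) by simp
  qed
  then obtain v where "\<exists>i<d. v i \<noteq> 0" "\<forall>i<d. mat_vec d N v i = 0"
    using singular_mat_of_kernel by blast
  then show ?thesis
    unfolding eigenvalues_mat_def m_def[symmetric] N_def by (auto simp: mat_vec_shift)
qed

lemma lambda_min_eq_Inf_rayleigh:
  assumes d: "d \<ge> 1" and sym: "symmetric_mat d A"
  shows "lambda_min d A = Inf (rayleigh_set d A)"
  unfolding lambda_min_def
proof (rule Min_eqI[OF finite_eigenvalues_mat _ Inf_rayleigh_eigenvalue[OF d sym]])
  fix l assume "l \<in> eigenvalues_mat d A"
  then obtain v where v: "\<exists>i<d. v i \<noteq> 0" "\<forall>i<d. mat_vec d A v i = l * v i"
    unfolding eigenvalues_mat_def by auto
  have "Inf (rayleigh_set d A) * sqnorm d v \<le> l * sqnorm d v"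
    using bilin_ge_Inf_rayleigh[of d A v] bilin_eigenvector[OF v(2)] by simp
  then show "Inf (rayleigh_set d A) \<le> l" using v(1) sqnorm_pos_iff by auto
qed

lemma eigenvalues_mat_uminus: "eigenvalues_mat d (\<lambda>i j. - A i j) = uminus ` eigenvalues_mat d A"
proof -
  have "mat_vec d (\<lambda>i j. - A i j) v i = - mat_vec d A v i" for v i
    by (simp add: mat_vec_def sum_negf)
  then have "l \<in> eigenvalues_mat d (\<lambda>i j. - A i j) \<longleftrightarrow> - l \<in> eigenvalues_mat d A" for l
    unfolding eigenvalues_mat_def by (auto simp: minus_equation_iff)
  then show ?thesis by (force simp: image_iff minus_equation_iff)
qed

lemma lambda_max_eq_uminus_lambda_min:
  assumes d: "d \<ge> 1" and sym: "symmetric_mat d A"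
  shows "lambda_max d A = - lambda_min d (\<lambda>i j. - A i j)"
  unfolding lambda_max_def
proof (rule Max_eqI[OF finite_eigenvalues_mat])
  have sym': "symmetric_mat d (\<lambda>i j. - A i j)" using sym by (auto simp: symmetric_mat_def)
  show "- lambda_min d (\<lambda>i j. - A i j) \<in> eigenvalues_mat d A"
    using Inf_rayleigh_eigenvalue[OF d sym'] unfolding lambda_min_eq_Inf_rayleigh[OF d sym']
      eigenvalues_mat_uminus by auto
next
  fix l assume "l \<in> eigenvalues_mat d A"
  then have "- l \<in> eigenvalues_mat d (\<lambda>i j. - A i j)" unfolding eigenvalues_mat_uminus by auto
  then show "l \<le> - lambda_min d (\<lambda>i j. - A i j)"
    unfolding lambda_min_def using Min_le[OF finite_eigenvalues_mat] by fastforce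
qed

lemma lambda_min_le_bilin:
  assumes "d \<ge> 1" "symmetric_mat d A"
  shows "lambda_min d A * sqnorm d x \<le> bilin d A x x"
  unfolding lambda_min_eq_Inf_rayleigh[OF assms] by (rule bilin_ge_Inf_rayleigh)

lemma bilin_le_lambda_max:
  assumes d: "d \<ge> 1" and sym: "symmetric_mat d A"
  shows "bilin d A x x \<le> lambda_max d A * sqnorm d x"
proof -
  have sym': "symmetric_mat d (\<lambda>i j. - A i j)" using sym by (auto simp: symmetric_mat_def)
  have "bilin d (\<lambda>i j. - A i j) x x = - bilin d A x x" by (simp add: bilin_expand sum_negf)
  then show ?thesis
    using lambda_min_le_bilin[OF d sym', of x] unfolding lambda_max_eq_uminus_lambda_min[OF d sym]
    by simp
qed

lemma lambda_min_pos:
  assumes d: "d \<ge> 1" and sym: "symmetric_mat d A" and pd: "pos_def_mat d A"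
  shows "lambda_min d A > 0"
proof -
  obtain v where v: "\<exists>i<d. v i \<noteq> 0" "\<forall>i<d. mat_vec d A v i = lambda_min d A * v i"
    using Inf_rayleigh_eigenvalue[OF d sym] unfolding eigenvalues_mat_def
      lambda_min_eq_Inf_rayleigh[OF d sym] by auto
  have "0 < bilin d A v v" by (rule pos_def_bilin_pos[OF pd v(1)])
  also have "\<dots> = lambda_min d A * sqnorm d v" by (rule bilin_eigenvector[OF v(2)])
  finally show ?thesis using v(1) sqnorm_pos_iff[of d v] by (metis zero_less_mult_pos2)
qed

lemma lambda_min_le_lambda_max:
  assumes d: "d \<ge> 1" and sym: "symmetric_mat d A"
  shows "lambda_min d A \<le> lambda_max d A"
proof -
  obtain x where "sqnorm d x = 1" using unit_vector_exists[OF d] by blast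
  then show ?thesis using lambda_min_le_bilin[OF d sym, of x] bilin_le_lambda_max[OF d sym, of x] by simp
qed

section \<open>Linear maps and the product Lebesgue measure\<close>

definition lin_map :: "nat \<Rightarrow> (nat \<Rightarrow> nat \<Rightarrow> real) \<Rightarrow> (nat \<Rightarrow> real) \<Rightarrow> (nat \<Rightarrow> real)" where
  "lin_map d M x = (\<lambda>i\<in>{..<d}. \<Sum>j<d. M i j * x j)"

lemma lin_map_comp: "lin_map d A (lin_map d B x) = lin_map d (mat_mul d A B) x"
proof -
  have "(\<Sum>j<d. A i j * (\<Sum>k<d. B j k * x k)) = (\<Sum>k<d. (\<Sum>j<d. A i j * B j k) * x k)" for i
    by (simp add: sum_distrib_left sum_distrib_right mult.assoc) (rule sum.swap)
  then show ?thesis unfolding lin_map_def mat_mul_def by (auto simp: restrict_def)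
qed

lemma space_lebesgue_d: "space (lebesgue_d d) = PiE {..<d} (\<lambda>_. UNIV)"
  by (simp add: lebesgue_d_def space_PiM)

lemma lin_map_id_mat: "x \<in> space (lebesgue_d d) \<Longrightarrow> lin_map d id_mat x = x"
  by (auto simp: lin_map_def sum_id_mat_left space_lebesgue_d PiE_def extensional_def)

lemma component_measurable_lebesgue_d: "i < d \<Longrightarrow> (\<lambda>x. x i) \<in> borel_measurable (lebesgue_d d)"
  using measurable_component_singleton[of i "{..<d}" "\<lambda>_. lborel"] by (simp add: lebesgue_d_def)

lemma linear_form_measurable: "(\<lambda>x. \<Sum>j<d. c j * x j) \<in> borel_measurable (lebesgue_d d)"
  by (intro borel_measurable_sum borel_measurable_times borel_measurable_const component_measurable_lebesgue_d) auto

lemma lin_map_measurable: "lin_map d M \<in> measurable (lebesgue_d d) (lebesgue_d d)"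
  unfolding lin_map_def
  by (subst (2) lebesgue_d_def, rule measurable_restrict) (simp add: linear_form_measurable)

lemma product_sigma_finite_lborel: "product_sigma_finite (\<lambda>_::nat. lborel :: real measure)"
  by (simp add: product_sigma_finite_def sigma_finite_lborel)

lemma permutes_moves_point_other_than:
  assumes p: "p permutes S" "p \<noteq> id"
  shows "\<exists>j\<in>S. p j \<noteq> j \<and> j \<noteq> k"
proof -
  obtain i where i: "p i \<noteq> i" using p(2) by (metis eq_id_iff)
  then have iS: "i \<in> S" using p(1) unfolding permutes_def by auto
  show ?thesis
  proof (cases "i = k")
    case True
    have "p (p k) \<noteq> p k" using i True permutes_inj[OF p(1)] by (metis inj_eq)
    moreover have "p k \<in> S" using permutes_in_image[OF p(1)] iS True by auto
    ultimately show ?thesis using i True by metis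
  qed (use i iS in auto)
qed

lemma det_mat_diagonal_off_row:
  assumes "\<And>i j. i < d \<Longrightarrow> j < d \<Longrightarrow> i \<noteq> j \<Longrightarrow> i \<noteq> k \<Longrightarrow> A i j = 0"
  shows "det_mat d A = (\<Prod>i<d. A i i)"
proof -
  let ?P = "{p. p permutes {..<d}}"
  let ?t = "\<lambda>p. of_int (sign p) * (\<Prod>i<d. A i (p i)) :: real"
  have "?t p = 0" if p: "p \<in> ?P - {id}" for p
  proof -
    obtain j where j: "j < d" "p j \<noteq> j" "j \<noteq> k"
      using permutes_moves_point_other_than[of p "{..<d}" k] p by auto
    have "p j < d" using permutes_in_image[of p "{..<d}"] p j by auto
    then have "A j (p j) = 0" using assms j by auto
    then show ?thesis using j by (auto simp: prod_zero_iff)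
  qed
  then have "sum ?t (?P - {id}) = 0" by (intro sum.neutral) auto
  moreover have "det_mat d A = ?t id + sum ?t (?P - {id})"
    unfolding det_mat_def by (rule sum.remove) (simp_all add: finite_permutations permutes_id)
  ultimately show ?thesis by (simp add: sign_id)
qed

definition row_mat :: "nat \<Rightarrow> nat \<Rightarrow> real \<Rightarrow> (nat \<Rightarrow> real) \<Rightarrow> (nat \<Rightarrow> nat \<Rightarrow> real)" where
  "row_mat d k a b = (\<lambda>i j. if i = k then (if j = k then a else b j) else id_mat i j)"

lemma det_row_mat: "k < d \<Longrightarrow> det_mat d (row_mat d k a b) = a"
proof -
  assume k: "k < d"
  have "det_mat d (row_mat d k a b) = (\<Prod>i<d. row_mat d k a b i i)"
    by (rule det_mat_diagonal_off_row[where k=k]) (auto simp: row_mat_def id_mat_def)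
  also have "\<dots> = row_mat d k a b k k * (\<Prod>i\<in>{..<d} - {k}. row_mat d k a b i i)"
    using k by (intro prod.remove) auto
  also have "(\<Prod>i\<in>{..<d} - {k}. row_mat d k a b i i) = 1"
    by (intro prod.neutral) (auto simp: row_mat_def id_mat_def)
  finally show ?thesis by (simp add: row_mat_def)
qed

lemma lin_map_row_mat:
  assumes k: "k < d" and x: "x \<in> space (lebesgue_d d)"
  shows "lin_map d (row_mat d k a b) x = x(k := a * x k + (\<Sum>j\<in>{..<d} - {k}. b j * x j))"
proof
  fix i
  show "lin_map d (row_mat d k a b) x i = (x(k := a * x k + (\<Sum>j\<in>{..<d} - {k}. b j * x j))) i"
  proof (cases "i < d")
    case False
    then have "x i = undefined" using x by (auto simp: space_lebesgue_d PiE_def extensional_def)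
    then show ?thesis using False k by (auto simp: lin_map_def)
  next
    case True
    show ?thesis
    proof (cases "i = k")
      case True
      have "(\<Sum>j<d. row_mat d k a b i j * x j) = row_mat d k a b i k * x k + (\<Sum>j\<in>{..<d} - {k}. row_mat d k a b i j * x j)"
        using k by (intro sum.remove) auto
      also have "(\<Sum>j\<in>{..<d} - {k}. row_mat d k a b i j * x j) = (\<Sum>j\<in>{..<d} - {k}. b j * x j)"
        using True by (intro sum.cong) (auto simp: row_mat_def)
      finally show ?thesis using True k by (simp add: lin_map_def row_mat_def)
    next
      case False
      have "(\<Sum>j<d. row_mat d k a b i j * x j) = (\<Sum>j<d. if i = j then x j else 0)"
        using False by (intro sum.cong) (auto simp: row_mat_def id_mat_def)
      also have "\<dots> = x i" using \<open>i < d\<close> by (simp add: sum.delta)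
      finally show ?thesis using False \<open>i < d\<close> by (simp add: lin_map_def)
    qed
  qed
qed

lemma lebesgue_d_insert:
  assumes k: "k < d"
  shows "lebesgue_d d = PiM (insert k ({..<d} - {k})) (\<lambda>_. lborel)"
  using k unfolding lebesgue_d_def by (metis insert_Diff lessThan_iff)

lemma nn_integral_row_mat:
  assumes k: "k < d" and a: "a \<noteq> 0" and g[measurable]: "g \<in> borel_measurable (lebesgue_d d)"
  shows "ennreal \<bar>a\<bar> * (\<integral>\<^sup>+x. g (lin_map d (row_mat d k a b) x) \<partial>lebesgue_d d) = integral\<^sup>N (lebesgue_d d) g"
proof -
  interpret P: product_sigma_finite "\<lambda>_::nat. lborel :: real measure" by (rule product_sigma_finite_lborel)
  define I where "I = {..<d} - {k}"
  have I: "finite I" "k \<notin> I" by (auto simp: I_def)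
  have LI: "lebesgue_d d = PiM (insert k I) (\<lambda>_. lborel)" unfolding I_def by (rule lebesgue_d_insert[OF k])
  let ?h = "lin_map d (row_mat d k a b)"
  have gh: "(\<lambda>x. g (?h x)) \<in> borel_measurable (lebesgue_d d)"
    by (rule measurable_comp[OF lin_map_measurable g, unfolded comp_def])
  have gL: "g \<in> borel_measurable (PiM (insert k I) (\<lambda>_. lborel))" using g LI by simp
  have ghL: "(\<lambda>x. ennreal \<bar>a\<bar> * g (?h x)) \<in> borel_measurable (PiM (insert k I) (\<lambda>_. lborel))"
    using gh LI by simp
  have "ennreal \<bar>a\<bar> * (\<integral>\<^sup>+x. g (?h x) \<partial>lebesgue_d d) = (\<integral>\<^sup>+x. ennreal \<bar>a\<bar> * g (?h x) \<partial>lebesgue_d d)"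
    by (rule nn_integral_cmult[OF gh, symmetric])
  also have "\<dots> = (\<integral>\<^sup>+x. (\<integral>\<^sup>+y. ennreal \<bar>a\<bar> * g (?h (x(k := y))) \<partial>lborel) \<partial>PiM I (\<lambda>_. lborel))"
    unfolding LI by (rule P.product_nn_integral_insert[OF I ghL[unfolded LI]])
  also have "\<dots> = (\<integral>\<^sup>+x. (\<integral>\<^sup>+y. g (x(k := y)) \<partial>lborel) \<partial>PiM I (\<lambda>_. lborel))"
  proof (rule nn_integral_cong)
    fix x assume x: "x \<in> space (PiM I (\<lambda>_. lborel :: real measure))"
    define t where "t = (\<Sum>j\<in>I. b j * x j)"
    have fm: "(\<lambda>y. g (x(k := y))) \<in> borel_measurable borel"
      using measurable_comp[OF measurable_component_update[OF x I(2)] gL] by (simp add: comp_def)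
    have xk: "x(k := y) \<in> space (lebesgue_d d)" for y
      using x k unfolding space_lebesgue_d by (auto simp: space_PiM PiE_def extensional_def I_def)
    have hx: "?h (x(k := y)) = x(k := t + a * y)" for y
      unfolding lin_map_row_mat[OF k xk] t_def I_def[symmetric]
      by (rule ext) (auto intro!: sum.cong simp: I(2) add.commute)
    have "(\<integral>\<^sup>+y. g (x(k := y)) \<partial>lborel) = ennreal \<bar>a\<bar> * (\<integral>\<^sup>+y. g (x(k := t + a * y)) \<partial>lborel)"
      by (rule nn_integral_real_affine[OF fm a])
    also have "\<dots> = (\<integral>\<^sup>+y. ennreal \<bar>a\<bar> * g (x(k := t + a * y)) \<partial>lborel)"
      by (rule nn_integral_cmult[symmetric]) (use fm in simp)
    finally show "(\<integral>\<^sup>+y. ennreal \<bar>a\<bar> * g (?h (x(k := y))) \<partial>lborel) = (\<integral>\<^sup>+y. g (x(k := y)) \<partial>lborel)"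
      unfolding hx by simp
  qed
  also have "\<dots> = integral\<^sup>N (lebesgue_d d) g"
    unfolding LI by (rule P.product_nn_integral_insert[OF I gL, symmetric])
  finally show ?thesis .
qed

definition shear_mat :: "nat \<Rightarrow> nat \<Rightarrow> (nat \<Rightarrow> real) \<Rightarrow> (nat \<Rightarrow> nat \<Rightarrow> real)" where
  "shear_mat d p c = (\<lambda>i j. id_mat i j - (if j = p \<and> i \<noteq> p then c i else 0))"

lemma det_shear_mat: "p < d \<Longrightarrow> det_mat d (shear_mat d p c) = 1"
proof -
  assume p: "p < d"
  have "mat_of d (mat_tr (shear_mat d p c)) = mat_of d (row_mat d p 1 (\<lambda>j. - c j))"
    unfolding mat_of_eq_iff by (auto simp: mat_tr_def shear_mat_def row_mat_def id_mat_def)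
  then have "det_mat d (shear_mat d p c) = det_mat d (row_mat d p 1 (\<lambda>j. - c j))"
    unfolding det_mat_mat_of by (metis det_transpose mat_of_carrier mat_of_mat_tr)
  then show ?thesis using det_row_mat[OF p] by simp
qed

lemma lin_map_shear_mat:
  assumes p: "p < d" and x: "x \<in> space (lebesgue_d d)"
  shows "lin_map d (shear_mat d p c) x = (\<lambda>i\<in>{..<d}. if i = p then x p else x i - c i * x p)"
proof
  fix i
  show "lin_map d (shear_mat d p c) x i = (\<lambda>i\<in>{..<d}. if i = p then x p else x i - c i * x p) i"
  proof (cases "i < d")
    case False
    then show ?thesis by (auto simp: lin_map_def)
  next
    case True
    have "(\<Sum>j<d. shear_mat d p c i j * x j) = (\<Sum>j<d. id_mat i j * x j) - (\<Sum>j<d. (if j = p \<and> i \<noteq> p then c i else 0) * x j)"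
      unfolding shear_mat_def by (simp add: algebra_simps sum_subtractf)
    also have "(\<Sum>j<d. id_mat i j * x j) = (\<Sum>j<d. if i = j then x j else 0)"
      by (intro sum.cong) (auto simp: id_mat_def)
    also have "\<dots> = x i" using True by (simp add: sum.delta)
    also have "(\<Sum>j<d. (if j = p \<and> i \<noteq> p then c i else 0) * x j) = (\<Sum>j<d. if j = p then (if i \<noteq> p then c i * x j else 0) else 0)"
      by (intro sum.cong) auto
    also have "\<dots> = (if i \<noteq> p then c i * x p else 0)" using p by (subst sum.delta) auto
    finally show ?thesis using True by (auto simp: lin_map_def)
  qed
qed

lemma pre_plus: "B \<in> sets borel \<Longrightarrow> (+) (c::real) -` B \<in> sets borel"
  using measurable_sets[of "(+) c" borel borel B] by simp

lemma distr_PiM_lborel_translate: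
  assumes I: "finite I"
  shows "distr (PiM I (\<lambda>_. lborel)) (PiM I (\<lambda>_. lborel)) (\<lambda>x. \<lambda>i\<in>I. t i + x i) = PiM I (\<lambda>_. lborel :: real measure)"
proof -
  interpret P: product_sigma_finite "\<lambda>_::'a. lborel :: real measure" by (simp add: product_sigma_finite_def sigma_finite_lborel)
  have Tm: "(\<lambda>x. \<lambda>i\<in>I. t i + x i) \<in> measurable (PiM I (\<lambda>_. lborel)) (PiM I (\<lambda>_. lborel :: real measure))"
    by (rule measurable_restrict) simp
  show ?thesis
  proof (rule P.PiM_eqI[OF I])
    show "sets (distr (PiM I (\<lambda>_. lborel)) (PiM I (\<lambda>_. lborel)) (\<lambda>x. \<lambda>i\<in>I. t i + x i)) = sets (PiM I (\<lambda>_. lborel))"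
      by simp
  next
    fix A assume A: "\<And>i. i \<in> I \<Longrightarrow> A i \<in> sets (lborel :: real measure)"
    have PA: "PiE I A \<in> sets (PiM I (\<lambda>_. lborel :: real measure))" using A I by (intro sets_PiM_I_finite) auto
    have pre: "(\<lambda>x. \<lambda>i\<in>I. t i + x i) -` PiE I A \<inter> space (PiM I (\<lambda>_. lborel)) = PiE I (\<lambda>i. (+) (t i) -` A i)"
      by (auto simp: space_PiM PiE_def Pi_def extensional_def)
    have one: "emeasure lborel ((+) c -` B) = emeasure lborel B" if B: "B \<in> sets (lborel :: real measure)" for c B
    proof -
      have "emeasure (distr lborel borel ((+) c)) B = emeasure lborel ((+) c -` B \<inter> space lborel)"
        by (rule emeasure_distr) (use B in auto)
      then show ?thesis using lborel_distr_plus[of c] by simp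
    qed
    have "emeasure (distr (PiM I (\<lambda>_. lborel)) (PiM I (\<lambda>_. lborel)) (\<lambda>x. \<lambda>i\<in>I. t i + x i)) (PiE I A)
        = emeasure (PiM I (\<lambda>_. lborel)) (PiE I (\<lambda>i. (+) (t i) -` A i))"
      by (subst emeasure_distr[OF Tm PA]) (simp add: pre)
    also have "\<dots> = (\<Prod>i\<in>I. emeasure lborel ((+) (t i) -` A i))"
      using A by (intro P.emeasure_PiM I) (auto intro: pre_plus)
    also have "\<dots> = (\<Prod>i\<in>I. emeasure lborel (A i))"
      using A one by (intro prod.cong) auto
    finally show "emeasure (distr (PiM I (\<lambda>_. lborel)) (PiM I (\<lambda>_. lborel)) (\<lambda>x. \<lambda>i\<in>I. t i + x i)) (PiE I A)
        = (\<Prod>i\<in>I. emeasure lborel (A i))" .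
  qed
qed

lemma nn_integral_PiM_lborel_translate:
  assumes I: "finite I" and h: "h \<in> borel_measurable (PiM I (\<lambda>_. lborel :: real measure))"
  shows "(\<integral>\<^sup>+x. h (\<lambda>i\<in>I. t i + x i) \<partial>PiM I (\<lambda>_. lborel)) = (\<integral>\<^sup>+x. h x \<partial>PiM I (\<lambda>_. lborel))"
proof -
  have "(\<lambda>x. \<lambda>i\<in>I. t i + x i) \<in> measurable (PiM I (\<lambda>_. lborel)) (PiM I (\<lambda>_. lborel :: real measure))"
    by (rule measurable_restrict) simp
  from nn_integral_distr[OF this] h show ?thesis unfolding distr_PiM_lborel_translate[OF I] by simp
qed

lemma nn_integral_shear_mat:
  assumes p: "p < d" and g[measurable]: "g \<in> borel_measurable (lebesgue_d d)"
  shows "(\<integral>\<^sup>+x. g (lin_map d (shear_mat d p c) x) \<partial>lebesgue_d d) = integral\<^sup>N (lebesgue_d d) g"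
proof -
  interpret P: product_sigma_finite "\<lambda>_::nat. lborel :: real measure" by (rule product_sigma_finite_lborel)
  define I where "I = {..<d} - {p}"
  have I: "finite I" "p \<notin> I" by (auto simp: I_def)
  have LI: "lebesgue_d d = PiM (insert p I) (\<lambda>_. lborel)" unfolding I_def by (rule lebesgue_d_insert[OF p])
  let ?h = "lin_map d (shear_mat d p c)"
  have gh: "(\<lambda>x. g (?h x)) \<in> borel_measurable (lebesgue_d d)"
    by (rule measurable_comp[OF lin_map_measurable g, unfolded comp_def])
  have gL: "g \<in> borel_measurable (PiM (insert p I) (\<lambda>_. lborel))" using g LI by simp
  have ghL: "(\<lambda>x. g (?h x)) \<in> borel_measurable (PiM (insert p I) (\<lambda>_. lborel))"
    using gh LI by simp
  have "(\<integral>\<^sup>+x. g (?h x) \<partial>lebesgue_d d) = (\<integral>\<^sup>+y. (\<integral>\<^sup>+x. g (?h (x(p := y))) \<partial>PiM I (\<lambda>_. lborel)) \<partial>lborel)"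
    unfolding LI by (rule P.product_nn_integral_insert_rev[OF I ghL])
  also have "\<dots> = (\<integral>\<^sup>+y. (\<integral>\<^sup>+x. g (x(p := y)) \<partial>PiM I (\<lambda>_. lborel)) \<partial>lborel)"
  proof (rule nn_integral_cong)
    fix y :: real
    define T where "T = (\<lambda>x. \<lambda>i\<in>I. (- c i * y) + x i)"
    have Gm: "(\<lambda>x. g (x(p := y))) \<in> borel_measurable (PiM I (\<lambda>_. lborel))"
    proof -
      have "(\<lambda>x. x(p := y)) \<in> measurable (PiM I (\<lambda>_. lborel)) (PiM (insert p I) (\<lambda>_. lborel :: real measure))"
        by (rule measurable_fun_upd[where J=I]) auto
      then show ?thesis using gL by (simp add: measurable_comp[unfolded comp_def])
    qed
    have hx: "?h (x(p := y)) = (T x)(p := y)" if x: "x \<in> space (PiM I (\<lambda>_. lborel :: real measure))" for x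
    proof -
      have xk: "x(p := y) \<in> space (lebesgue_d d)"
        using x p unfolding space_lebesgue_d by (auto simp: space_PiM PiE_def extensional_def I_def)
      show ?thesis unfolding lin_map_shear_mat[OF p xk] T_def
        using x p by (auto simp: I_def space_PiM PiE_def extensional_def fun_eq_iff)
    qed
    have "(\<integral>\<^sup>+x. g (?h (x(p := y))) \<partial>PiM I (\<lambda>_. lborel)) = (\<integral>\<^sup>+x. g ((T x)(p := y)) \<partial>PiM I (\<lambda>_. lborel))"
      by (rule nn_integral_cong) (simp add: hx)
    also have "\<dots> = (\<integral>\<^sup>+x. g (x(p := y)) \<partial>PiM I (\<lambda>_. lborel))"
      unfolding T_def by (rule nn_integral_PiM_lborel_translate[OF I(1) Gm])
    finally show "(\<integral>\<^sup>+x. g (?h (x(p := y))) \<partial>PiM I (\<lambda>_. lborel)) = (\<integral>\<^sup>+x. g (x(p := y)) \<partial>PiM I (\<lambda>_. lborel))" .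
  qed
  also have "\<dots> = integral\<^sup>N (lebesgue_d d) g"
    unfolding LI by (rule P.product_nn_integral_insert_rev[OF I gL, symmetric])
  finally show ?thesis .
qed

(* Rather than proving the change of variables formula for every invertible matrix, we record it
   as a property, verify it for the elementary matrices above and close it under products. *)
definition linear_subst :: "nat \<Rightarrow> (nat \<Rightarrow> nat \<Rightarrow> real) \<Rightarrow> bool" where
  "linear_subst d M \<longleftrightarrow> det_mat d M \<noteq> 0 \<and> (\<forall>g \<in> borel_measurable (lebesgue_d d).
      ennreal \<bar>det_mat d M\<bar> * (\<integral>\<^sup>+x. g (lin_map d M x) \<partial>lebesgue_d d) = integral\<^sup>N (lebesgue_d d) g)"

lemma linear_subst_row_mat: "k < d \<Longrightarrow> a \<noteq> 0 \<Longrightarrow> linear_subst d (row_mat d k a b)"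
  unfolding linear_subst_def det_row_mat by (auto intro: nn_integral_row_mat)

lemma linear_subst_shear_mat: "p < d \<Longrightarrow> linear_subst d (shear_mat d p c)"
  unfolding linear_subst_def det_shear_mat by (auto intro: nn_integral_shear_mat)

lemma linear_subst_mat_mul:
  assumes A: "linear_subst d A" and B: "linear_subst d B"
  shows "linear_subst d (mat_mul d A B)"
  unfolding linear_subst_def
proof (intro conjI ballI)
  show "det_mat d (mat_mul d A B) \<noteq> 0" using A B unfolding linear_subst_def det_mat_mat_mul by auto
  fix g :: "(nat \<Rightarrow> real) \<Rightarrow> ennreal" assume g: "g \<in> borel_measurable (lebesgue_d d)"
  have g': "(\<lambda>x. g (lin_map d A x)) \<in> borel_measurable (lebesgue_d d)"
    by (rule measurable_comp[OF lin_map_measurable g, unfolded comp_def])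
  have "ennreal \<bar>det_mat d (mat_mul d A B)\<bar> * (\<integral>\<^sup>+x. g (lin_map d (mat_mul d A B) x) \<partial>lebesgue_d d)
      = ennreal \<bar>det_mat d A\<bar> * (ennreal \<bar>det_mat d B\<bar> * (\<integral>\<^sup>+x. g (lin_map d A (lin_map d B x)) \<partial>lebesgue_d d))"
    unfolding det_mat_mat_mul lin_map_comp abs_mult by (simp add: ennreal_mult mult.assoc)
  also have "ennreal \<bar>det_mat d B\<bar> * (\<integral>\<^sup>+x. g (lin_map d A (lin_map d B x)) \<partial>lebesgue_d d)
      = (\<integral>\<^sup>+x. g (lin_map d A x) \<partial>lebesgue_d d)"
  proof -
    from B have "\<forall>g \<in> borel_measurable (lebesgue_d d). ennreal \<bar>det_mat d B\<bar> * (\<integral>\<^sup>+x. g (lin_map d B x) \<partial>lebesgue_d d) = integral\<^sup>N (lebesgue_d d) g"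
      unfolding linear_subst_def by blast
    from bspec[OF this g'] show ?thesis by simp
  qed
  also have "ennreal \<bar>det_mat d A\<bar> * \<dots> = integral\<^sup>N (lebesgue_d d) g"
    using A g unfolding linear_subst_def by blast
  finally show "ennreal \<bar>det_mat d (mat_mul d A B)\<bar> * (\<integral>\<^sup>+x. g (lin_map d (mat_mul d A B) x) \<partial>lebesgue_d d) = integral\<^sup>N (lebesgue_d d) g" .
qed

lemma linear_subst_id_mat: "linear_subst d id_mat"
  unfolding linear_subst_def det_id_mat
  by (auto intro!: nn_integral_cong simp: lin_map_id_mat)

lemma linear_subst_det: "linear_subst d M \<Longrightarrow> det_mat d M \<noteq> 0"
  unfolding linear_subst_def by simp

section \<open>Congruence and symmetric Gaussian elimination\<close>

definition congr_mat :: "nat \<Rightarrow> (nat \<Rightarrow> nat \<Rightarrow> real) \<Rightarrow> (nat \<Rightarrow> nat \<Rightarrow> real) \<Rightarrow> (nat \<Rightarrow> nat \<Rightarrow> real)" where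
  "congr_mat d M S = mat_mul d M (mat_mul d S (mat_tr M))"

lemma mat_of_congr_mat: "mat_of d (congr_mat d M S) = mat_of d M * (mat_of d S * transpose_mat (mat_of d M))"
  by (simp add: congr_mat_def mat_of_mat_mul mat_of_mat_tr)

lemma det_congr_mat: "Determinant.det (mat_of d (congr_mat d M S)) = (Determinant.det (mat_of d M))^2 * Determinant.det (mat_of d S)"
proof -
  have "Determinant.det (mat_of d M * (mat_of d S * transpose_mat (mat_of d M))) = Determinant.det (mat_of d M) * Determinant.det (mat_of d S * transpose_mat (mat_of d M))"
    by (rule det_mult[of _ d]) auto
  also have "Determinant.det (mat_of d S * transpose_mat (mat_of d M)) = Determinant.det (mat_of d S) * Determinant.det (transpose_mat (mat_of d M))"
    by (rule det_mult[of _ d]) auto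
  finally show ?thesis by (simp add: congr_mat_def mat_of_mat_mul mat_of_mat_tr det_transpose[OF mat_of_carrier] power2_eq_square)
qed

lemma congr_mat_entry: "congr_mat d M S i j = bilin d S (\<lambda>k. M i k) (\<lambda>l. M j l)"
  by (simp add: congr_mat_def mat_mul_def mat_tr_def bilin_expand sum_distrib_left mult.assoc mult.left_commute)

lemma congr_mat_mat_mul: "i < d \<Longrightarrow> j < d \<Longrightarrow> congr_mat d (mat_mul d A B) S i j = congr_mat d A (congr_mat d B S) i j"
proof -
  assume ij: "i < d" "j < d"
  have "mat_of d (congr_mat d (mat_mul d A B) S) = mat_of d (congr_mat d A (congr_mat d B S))"
  proof -
    have c: "mat_of d A \<in> carrier_mat d d" "mat_of d B \<in> carrier_mat d d" "mat_of d S \<in> carrier_mat d d"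
      "transpose_mat (mat_of d A) \<in> carrier_mat d d" "transpose_mat (mat_of d B) \<in> carrier_mat d d" by auto
    show ?thesis unfolding mat_of_congr_mat mat_of_mat_mul
      using c by (simp add: transpose_mult[of _ d d _ d] assoc_mult_mat[of _ d d _ d _ d])
  qed
  then show ?thesis using ij unfolding mat_of_eq_iff by auto
qed

lemma congr_mat_id_mat: "i < d \<Longrightarrow> j < d \<Longrightarrow> congr_mat d id_mat S i j = S i j"
proof -
  assume "i < d" "j < d"
  moreover have "(\<lambda>k. id_mat i k) = id_mat i" "(\<lambda>k. id_mat j k) = id_mat j" by auto
  ultimately show ?thesis unfolding congr_mat_entry by (simp add: bilin_unit)
qed

lemma bilin_vec_of: "bilin d A x y = vec_of d x \<bullet> (mat_of d A *\<^sub>v vec_of d y)"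
  unfolding bilin_def dot_vec_of mat_vec_vec_of ..

lemma vec_of_transpose_mult: "vec_of d (\<lambda>k. \<Sum>i<d. M i k * x i) = transpose_mat (mat_of d M) *\<^sub>v vec_of d x"
  by (rule eq_vecI) (auto simp: scalar_prod_def atLeast0LessThan Matrix.row_def mult.commute)

lemma symmetric_congr_mat: "symmetric_mat d S \<Longrightarrow> symmetric_mat d (congr_mat d M S)"
  unfolding symmetric_mat_def congr_mat_entry using bilin_sym by (metis symmetric_mat_def)

lemma bilin_congr_mat: "bilin d (congr_mat d M S) x y = bilin d S (\<lambda>k. \<Sum>i<d. M i k * x i) (\<lambda>l. \<Sum>j<d. M j l * y j)"
proof -
  have c: "mat_of d M \<in> carrier_mat d d" "mat_of d S \<in> carrier_mat d d" "transpose_mat (mat_of d M) \<in> carrier_mat d d"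
    "vec_of d x \<in> carrier_vec d" "vec_of d y \<in> carrier_vec d" by auto
  have w: "mat_of d S *\<^sub>v (transpose_mat (mat_of d M) *\<^sub>v vec_of d y) \<in> carrier_vec d"
    by (rule mult_mat_vec_carrier[OF c(2) mult_mat_vec_carrier[OF c(3) c(5)]])
  have "bilin d (congr_mat d M S) x y = vec_of d x \<bullet> (mat_of d M *\<^sub>v (mat_of d S *\<^sub>v (transpose_mat (mat_of d M) *\<^sub>v vec_of d y)))"
    unfolding bilin_vec_of mat_of_congr_mat using c by (simp add: assoc_mult_mat_vec[of _ d d _ d])
  also have "\<dots> = (transpose_mat (mat_of d M) *\<^sub>v vec_of d x) \<bullet> (mat_of d S *\<^sub>v (transpose_mat (mat_of d M) *\<^sub>v vec_of d y))"
    by (rule transpose_vec_mult_scalar[OF c(1) w c(4), symmetric])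
  also have "\<dots> = bilin d S (\<lambda>k. \<Sum>i<d. M i k * x i) (\<lambda>l. \<Sum>j<d. M j l * y j)"
    unfolding bilin_vec_of vec_of_transpose_mult ..
  finally show ?thesis .
qed

lemma pos_def_congr_mat:
  assumes pd: "pos_def_mat d S" and dM: "det_mat d M \<noteq> 0"
  shows "pos_def_mat d (congr_mat d M S)"
  unfolding pos_def_mat_def
proof (intro allI impI)
  fix x :: "nat \<Rightarrow> real" assume x: "\<exists>i<d. x i \<noteq> 0"
  define y where "y = (\<lambda>k. \<Sum>i<d. M i k * x i)"
  have "\<exists>k<d. y k \<noteq> 0"
  proof (rule ccontr)
    assume "\<not> ?thesis"
    then have y0: "\<forall>k<d. y k = 0" by auto
    have "vec_of d y = transpose_mat (mat_of d M) *\<^sub>v vec_of d x" unfolding y_def by (rule vec_of_transpose_mult)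
    then have T0: "transpose_mat (mat_of d M) *\<^sub>v vec_of d x = 0\<^sub>v d" using y0 by (metis eq_vecI dim_vec_of index_zero_vec(1,2) vec_of_index)
    have "Determinant.det (mat_of d M) \<noteq> 0" using dM det_mat_mat_of by simp
    then obtain Mi where Mi: "Mi \<in> carrier_mat d d" "mat_of d M * Mi = 1\<^sub>m d" using mat_of_invertible by blast
    have "transpose_mat Mi * transpose_mat (mat_of d M) = 1\<^sub>m d"
      using transpose_mult[OF mat_of_carrier[of d M] Mi(1)] Mi(2) by simp
    then have "vec_of d x = transpose_mat Mi *\<^sub>v (transpose_mat (mat_of d M) *\<^sub>v vec_of d x)"
      using Mi(1) by (simp add: assoc_mult_mat_vec[symmetric, of _ d d _ d])
    also have "\<dots> = 0\<^sub>v d" unfolding T0 using Mi(1)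
      by (intro eq_vecI) (auto simp: scalar_prod_def)
    finally show False using x by (metis index_zero_vec(1) vec_of_index)
  qed
  then have "bilin d S y y > 0" using pd unfolding pos_def_mat_def bilin_def by auto
  then show "dot d x (mat_vec d (congr_mat d M S) x) > 0"
    using bilin_congr_mat[of d M S x x] unfolding bilin_def y_def by simp
qed

lemma shear_congr_mat_entry:
  assumes ij: "i < d" "j < d" "p < d"
  shows "congr_mat d (shear_mat d p c) S i j = S i j - (if j \<noteq> p then c j else 0) * S i p
     - (if i \<noteq> p then c i else 0) * S p j + (if i \<noteq> p then c i else 0) * (if j \<noteq> p then c j else 0) * S p p"
proof -
  define a where "a = (if i \<noteq> p then c i else 0)"
  define b where "b = (if j \<noteq> p then c j else 0)"
  have ri: "(\<lambda>k. shear_mat d p c i k) = (\<lambda>k. 1 * id_mat i k + (- a) * id_mat p k)"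
    by (rule ext) (auto simp: shear_mat_def id_mat_def a_def)
  have rj: "(\<lambda>k. shear_mat d p c j k) = (\<lambda>k. 1 * id_mat j k + (- b) * id_mat p k)"
    by (rule ext) (auto simp: shear_mat_def id_mat_def b_def)
  have "congr_mat d (shear_mat d p c) S i j = S i j - b * S i p - a * S p j + a * b * S p p"
    unfolding congr_mat_entry ri rj bilin_lin_left bilin_lin_right
    using ij by (simp add: bilin_unit algebra_simps)
  then show ?thesis unfolding a_def b_def .
qed

definition decoupled :: "nat \<Rightarrow> (nat \<Rightarrow> nat \<Rightarrow> real) \<Rightarrow> nat set" where
  "decoupled d S = {p. p < d \<and> (\<forall>q<d. q \<noteq> p \<longrightarrow> S p q = 0)}"

lemma shear_pivot_decoupled:
  assumes sym: "symmetric_mat d S" and p: "p < d" and Spp: "S p p \<noteq> 0"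
  shows "insert p (decoupled d S) \<subseteq> decoupled d (congr_mat d (shear_mat d p (\<lambda>i. S i p / S p p)) S)"
    (is "_ \<subseteq> decoupled d ?S'")
proof -
  have E: "?S' i j = S i j - (if j \<noteq> p then S j p / S p p else 0) * S i p
     - (if i \<noteq> p then S i p / S p p else 0) * S p j
     + (if i \<noteq> p then S i p / S p p else 0) * (if j \<noteq> p then S j p / S p p else 0) * S p p"
    if "i < d" "j < d" for i j
    using shear_congr_mat_entry[OF that p] .
  have "?S' p q = 0" if "q < d" "q \<noteq> p" for q
    using E[OF p that(1)] that Spp sym p unfolding symmetric_mat_def by simp
  then have "p \<in> decoupled d ?S'" using p by (auto simp: decoupled_def)
  moreover have "z \<in> decoupled d ?S'" if z: "z \<in> decoupled d S" "z \<noteq> p" for z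
  proof -
    have zd: "z < d" and zi: "\<forall>q<d. q \<noteq> z \<longrightarrow> S z q = 0" using z by (auto simp: decoupled_def)
    have "S z p = 0" using zi z(2) p by auto
    have "?S' z q = 0" if "q < d" "q \<noteq> z" for q
      using E[OF zd that(1)] zi that \<open>S z p = 0\<close> z(2) by simp
    then show ?thesis using zd by (auto simp: decoupled_def)
  qed
  ultimately show ?thesis by blast
qed

lemma shear_pivot_pairwise_zero:
  assumes sym: "symmetric_mat d S" and p: "p < d" "S p p \<noteq> 0" and P: "P \<subseteq> {..<d}"
    and pw: "\<forall>q\<in>P. \<forall>q'\<in>P. q \<noteq> q' \<longrightarrow> S q q' = 0" and col: "\<forall>q\<in>P. q \<noteq> p \<longrightarrow> S q p = 0"
  shows "\<forall>q\<in>P. \<forall>q'\<in>P. q \<noteq> q' \<longrightarrow> congr_mat d (shear_mat d p (\<lambda>i. S i p / S p p)) S q q' = 0"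
proof (intro ballI impI)
  let ?S' = "congr_mat d (shear_mat d p (\<lambda>i. S i p / S p p)) S"
  fix q q' assume q: "q \<in> P" "q' \<in> P" "q \<noteq> q'"
  then have qd: "q < d" "q' < d" using P by auto
  have "p \<in> decoupled d ?S'" using shear_pivot_decoupled[OF sym p] by blast
  then have pS': "?S' p j = 0 \<and> ?S' j p = 0" if "j < d" "j \<noteq> p" for j
    using that symmetric_congr_mat[OF sym] p(1) unfolding decoupled_def symmetric_mat_def by auto
  show "?S' q q' = 0"
  proof (cases "q = p \<or> q' = p")
    case True then show ?thesis using pS' qd q(3) by auto
  next
    case False
    then show ?thesis using shear_congr_mat_entry[OF qd p(1), of "\<lambda>i. S i p / S p p" S] col pw q by simp
  qed
qed

lemma shear_mat_id_row: "q = p \<or> c q = 0 \<Longrightarrow> shear_mat d p c q j = id_mat q j"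
  by (auto simp: shear_mat_def)

lemma mat_mul_id_row:
  assumes "\<forall>j<d. A q j = id_mat q j" "q < d"
  shows "mat_mul d A B q j = B q j"
  using assms sum_id_mat_left[of q d "\<lambda>k. B k j"] by (simp add: mat_mul_def)

lemma pivot_exists:
  assumes "\<not> {..<d} \<subseteq> decoupled d S" and P: "P \<subseteq> {..<d}"
    and pw: "\<forall>p\<in>P. \<forall>q\<in>P. p \<noteq> q \<longrightarrow> S p q = 0"
  shows "\<exists>p<d. p \<notin> decoupled d S \<and> (\<forall>q\<in>P. q \<noteq> p \<longrightarrow> S q p = 0)"
proof (cases "\<exists>p\<in>P. p \<notin> decoupled d S")
  case True
  then show ?thesis using P pw by blast
next
  case False
  obtain p where "p < d" "p \<notin> decoupled d S" using assms(1) by auto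
  moreover have "\<forall>q\<in>P. q \<noteq> p \<longrightarrow> S q p = 0" using False \<open>p < d\<close> by (auto simp: decoupled_def)
  ultimately show ?thesis by blast
qed

(* Symmetric Gaussian elimination, choosing pivots in P first, so that the rows in P of the
   eliminating matrix stay rows of the identity. *)
lemma diagonalizing_congruence:
  assumes "symmetric_mat d S" "pos_def_mat d S" "P \<subseteq> {..<d}"
    "\<forall>p\<in>P. \<forall>q\<in>P. p \<noteq> q \<longrightarrow> S p q = 0"
  shows "\<exists>M. linear_subst d M \<and> (\<forall>i<d. \<forall>j<d. i \<noteq> j \<longrightarrow> congr_mat d M S i j = 0)
     \<and> (\<forall>q\<in>P. \<forall>j<d. M q j = id_mat q j)"
  using assms
proof (induction "card ({..<d} - decoupled d S)" arbitrary: S rule: less_induct)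
  case less
  note sym = less.prems(1) and pd = less.prems(2) and P = less.prems(3) and pw = less.prems(4)
  show ?case
  proof (cases "{..<d} \<subseteq> decoupled d S")
    case True
    then have "\<forall>i<d. \<forall>j<d. i \<noteq> j \<longrightarrow> congr_mat d id_mat S i j = 0"
      by (auto simp: congr_mat_id_mat decoupled_def)
    then show ?thesis using linear_subst_id_mat by blast
  next
    case False
    obtain p where p: "p < d" "p \<notin> decoupled d S" "\<forall>q\<in>P. q \<noteq> p \<longrightarrow> S q p = 0"
      using pivot_exists[OF False P pw] by blast
    have Spp: "S p p > 0" by (rule pos_def_diag_pos[OF pd p(1)])
    define C where "C = shear_mat d p (\<lambda>i. S i p / S p p)"
    define S' where "S' = congr_mat d C S"
    have sym': "symmetric_mat d S'" unfolding S'_def by (rule symmetric_congr_mat[OF sym])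
    have pd': "pos_def_mat d S'"
      unfolding S'_def C_def by (rule pos_def_congr_mat[OF pd]) (simp add: det_shear_mat[OF p(1)])
    have dec: "insert p (decoupled d S) \<subseteq> decoupled d S'"
      unfolding S'_def C_def using shear_pivot_decoupled[OF sym p(1)] Spp by simp
    have "{..<d} - decoupled d S' \<subset> {..<d} - decoupled d S" using dec p(1,2) by blast
    then have lt: "card ({..<d} - decoupled d S') < card ({..<d} - decoupled d S)"
      by (rule psubset_card_mono[rotated]) simp
    have pw': "\<forall>q\<in>P. \<forall>q'\<in>P. q \<noteq> q' \<longrightarrow> S' q q' = 0"
      unfolding S'_def C_def using shear_pivot_pairwise_zero[OF sym p(1) _ P pw p(3)] Spp by simp
    obtain M' where M': "linear_subst d M'" "\<forall>i<d. \<forall>j<d. i \<noteq> j \<longrightarrow> congr_mat d M' S' i j = 0"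
      "\<forall>q\<in>P. \<forall>j<d. M' q j = id_mat q j"
      using less.hyps[OF lt sym' pd' P pw'] by blast
    have "linear_subst d (mat_mul d M' C)"
      unfolding C_def by (rule linear_subst_mat_mul[OF M'(1) linear_subst_shear_mat[OF p(1)]])
    moreover have "\<forall>i<d. \<forall>j<d. i \<noteq> j \<longrightarrow> congr_mat d (mat_mul d M' C) S i j = 0"
      using M'(2) unfolding S'_def by (simp add: congr_mat_mat_mul)
    moreover have "\<forall>q\<in>P. \<forall>j<d. mat_mul d M' C q j = id_mat q j"
    proof (intro ballI allI impI)
      fix q j assume q: "q \<in> P" and "j < d"
      then have "mat_mul d M' C q j = C q j" using M'(3) P by (intro mat_mul_id_row) auto
      also have "\<dots> = id_mat q j" unfolding C_def using p(3) q by (intro shear_mat_id_row) auto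
      finally show "mat_mul d M' C q j = id_mat q j" .
    qed
    ultimately show ?thesis by blast
  qed
qed

section \<open>Linear images of Gaussian laws\<close>

lemma transpose_congr_inverse:
  fixes Mm Sm Q Q' Mi :: "real Matrix.mat"
  assumes c: "Mm \<in> carrier_mat n n" "Sm \<in> carrier_mat n n" "Q \<in> carrier_mat n n"
      "Q' \<in> carrier_mat n n" "Mi \<in> carrier_mat n n"
    and SQ: "Sm * Q = 1\<^sub>m n"
    and Q'S: "Q' * (Mm * (Sm * transpose_mat Mm)) = 1\<^sub>m n"
    and MiM: "Mi * Mm = 1\<^sub>m n"
  shows "transpose_mat Mm * Q' * Mm = Q"
proof -
  have T: "transpose_mat Mm * transpose_mat Mi = 1\<^sub>m n"
    using transpose_mult[OF c(5) c(1)] MiM by simp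
  have cT: "transpose_mat Mm \<in> carrier_mat n n" "transpose_mat Mi \<in> carrier_mat n n" using c by auto
  have e0: "transpose_mat Mm * (transpose_mat Mi * Q) = Q"
  proof -
    have "(transpose_mat Mm * transpose_mat Mi) * Q = Q" using T c by simp
    then show ?thesis using c cT by simp
  qed
  have e1: "Q' * (Mm * (Sm * (transpose_mat Mm * X))) = X" if X: "X \<in> carrier_mat n n" for X
  proof -
    have "(Q' * (Mm * (Sm * transpose_mat Mm))) * X = X" using Q'S X by simp
    also have "(Q' * (Mm * (Sm * transpose_mat Mm))) * X = Q' * ((Mm * (Sm * transpose_mat Mm)) * X)"
      by (rule assoc_mult_mat[of _ n n _ n _ n]) (use c cT X in auto)
    also have "(Mm * (Sm * transpose_mat Mm)) * X = Mm * ((Sm * transpose_mat Mm) * X)"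
      by (rule assoc_mult_mat[of _ n n _ n _ n]) (use c cT X in auto)
    also have "(Sm * transpose_mat Mm) * X = Sm * (transpose_mat Mm * X)"
      by (rule assoc_mult_mat[of _ n n _ n _ n]) (use c cT X in auto)
    finally show ?thesis .
  qed
  have "transpose_mat Mm * Q' * Mm = transpose_mat Mm * (Q' * (Mm * (Sm * Q)))"
    using SQ c cT by simp
  also have "\<dots> = transpose_mat Mm * (Q' * (Mm * (Sm * (transpose_mat Mm * (transpose_mat Mi * Q)))))"
    using e0 by simp
  also have "\<dots> = transpose_mat Mm * (transpose_mat Mi * Q)"
    using e1[of "transpose_mat Mi * Q"] c cT by simp
  also have "\<dots> = Q" by (rule e0)
  finally show ?thesis .
qed

lemma lin_map_diff: "i < d \<Longrightarrow> lin_map d M x i - lin_map d M y i = lin_map d M (\<lambda>j. x j - y j) i"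
  by (simp add: lin_map_def algebra_simps sum_subtractf)

lemma bilin_inv_congr_mat:
  assumes dM: "Determinant.det (mat_of d M) \<noteq> 0" and dS: "Determinant.det (mat_of d S) \<noteq> 0"
  shows "bilin d (inv_mat d (congr_mat d M S)) (lin_map d M z) (lin_map d M z) = bilin d (inv_mat d S) z z"
proof -
  let ?Q' = "inv_mat d (congr_mat d M S)"
  have dS': "Determinant.det (mat_of d (congr_mat d M S)) \<noteq> 0"
    unfolding det_congr_mat using dM dS by simp
  obtain Mi where Mi: "Mi \<in> carrier_mat d d" "Mi * mat_of d M = 1\<^sub>m d"
    using mat_of_invertible[OF dM] by blast
  have "transpose_mat (mat_of d M) * mat_of d ?Q' * mat_of d M = mat_of d (inv_mat d S)"
    using inv_mat_mat_of(1)[OF dS] inv_mat_mat_of(2)[OF dS'] Mi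
    by (intro transpose_congr_inverse[of _ d]) (simp_all add: mat_of_congr_mat)
  then have "mat_of d (congr_mat d (mat_tr M) ?Q') = mat_of d (inv_mat d S)"
    by (simp add: mat_of_congr_mat mat_of_mat_tr assoc_mult_mat[of _ d d _ d _ d])
  then have key: "\<forall>i<d. \<forall>j<d. congr_mat d (mat_tr M) ?Q' i j = inv_mat d S i j"
    unfolding mat_of_eq_iff .
  have "bilin d ?Q' (lin_map d M z) (lin_map d M z) = bilin d (congr_mat d (mat_tr M) ?Q') z z"
    unfolding bilin_congr_mat by (intro bilin_cong) (auto simp: lin_map_def mat_tr_def)
  also have "\<dots> = bilin d (inv_mat d S) z z"
    unfolding bilin_expand using key by (intro sum.cong) auto
  finally show ?thesis .
qed

lemma gauss_density_lin_map:
  assumes dM: "Determinant.det (mat_of d M) \<noteq> 0" and dS: "Determinant.det (mat_of d S) \<noteq> 0"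
  shows "\<bar>det_mat d M\<bar> * gauss_density d (lin_map d M m) (congr_mat d M S) (lin_map d M x)
        = gauss_density d m S x"
proof -
  have q: "dot d (\<lambda>i. lin_map d M x i - lin_map d M m i)
        (mat_vec d (inv_mat d (congr_mat d M S)) (\<lambda>i. lin_map d M x i - lin_map d M m i))
     = dot d (\<lambda>i. x i - m i) (mat_vec d (inv_mat d S) (\<lambda>i. x i - m i))"
  proof -
    have "bilin d (inv_mat d (congr_mat d M S)) (\<lambda>i. lin_map d M x i - lin_map d M m i)
        (\<lambda>i. lin_map d M x i - lin_map d M m i)
      = bilin d (inv_mat d (congr_mat d M S)) (lin_map d M (\<lambda>i. x i - m i)) (lin_map d M (\<lambda>i. x i - m i))"
      by (rule bilin_cong) (simp_all add: lin_map_diff)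
    with bilin_inv_congr_mat[OF dM dS, of "\<lambda>i. x i - m i"] show ?thesis
      unfolding bilin_def by (rule trans[rotated])
  qed
  have "det_mat d (congr_mat d M S) = (det_mat d M)^2 * det_mat d S"
    unfolding det_mat_mat_of det_congr_mat ..
  then have sqrt_det: "sqrt ((2 * pi) ^ d * det_mat d (congr_mat d M S)) = \<bar>det_mat d M\<bar> * sqrt ((2 * pi) ^ d * det_mat d S)"
    by (simp add: real_sqrt_mult mult.left_commute)
  have "\<bar>det_mat d M\<bar> \<noteq> 0" using dM det_mat_mat_of by simp
  then show ?thesis unfolding gauss_density_def q sqrt_det by simp
qed

lemma gauss_density_measurable: "(\<lambda>x. gauss_density d m S x) \<in> borel_measurable (lebesgue_d d)"
proof -
  have q[measurable]: "(\<lambda>x. \<Sum>i<d. (x i - m i) * (\<Sum>j<d. inv_mat d S i j * (x j - m j))) \<in> borel_measurable (lebesgue_d d)"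
    by (intro borel_measurable_sum borel_measurable_times borel_measurable_diff borel_measurable_const component_measurable_lebesgue_d) auto
  show ?thesis unfolding gauss_density_def dot_def mat_vec_def by measurable
qed

lemma distr_density_linear_subst:
  assumes M: "linear_subst d M"
    and f[measurable]: "f \<in> borel_measurable (lebesgue_d d)" and g[measurable]: "g \<in> borel_measurable (lebesgue_d d)"
    and fg: "\<And>x. \<bar>det_mat d M\<bar> * g (lin_map d M x) = f x"
  shows "distr (density (lebesgue_d d) (\<lambda>x. ennreal (f x))) (lebesgue_d d) (lin_map d M)
       = density (lebesgue_d d) (\<lambda>x. ennreal (g x))"
proof (rule measure_eqI)
  fix A assume "A \<in> sets (distr (density (lebesgue_d d) (\<lambda>x. ennreal (f x))) (lebesgue_d d) (lin_map d M))"
  then have A[measurable]: "A \<in> sets (lebesgue_d d)" by simp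
  have h: "lin_map d M \<in> measurable (density (lebesgue_d d) (\<lambda>x. ennreal (f x))) (lebesgue_d d)"
    by (simp add: lin_map_measurable)
  have G: "(\<lambda>y. ennreal (g y) * indicator A y) \<in> borel_measurable (lebesgue_d d)" by measurable
  have "emeasure (distr (density (lebesgue_d d) (\<lambda>x. ennreal (f x))) (lebesgue_d d) (lin_map d M)) A
      = (\<integral>\<^sup>+x. ennreal (f x) * indicator A (lin_map d M x) \<partial>lebesgue_d d)"
    using measurable_sets[OF h A]
    by (simp add: emeasure_distr[OF h A] emeasure_density indicator_def cong: nn_integral_cong)
  also have "\<dots> = ennreal \<bar>det_mat d M\<bar> * (\<integral>\<^sup>+x. ennreal (g (lin_map d M x)) * indicator A (lin_map d M x) \<partial>lebesgue_d d)"
    unfolding fg[symmetric] using measurable_comp[OF lin_map_measurable G]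
    by (subst nn_integral_cmult[symmetric]) (auto simp: comp_def ennreal_mult' mult.assoc)
  also have "\<dots> = (\<integral>\<^sup>+y. ennreal (g y) * indicator A y \<partial>lebesgue_d d)"
    using M G unfolding linear_subst_def by auto
  also have "\<dots> = emeasure (density (lebesgue_d d) (\<lambda>x. ennreal (g x))) A"
    by (rule emeasure_density[symmetric]) simp_all
  finally show "emeasure (distr (density (lebesgue_d d) (\<lambda>x. ennreal (f x))) (lebesgue_d d) (lin_map d M)) A
      = emeasure (density (lebesgue_d d) (\<lambda>x. ennreal (g x))) A" .
qed simp

lemma distr_gaussian_lin_map:
  assumes M: "linear_subst d M" and dS: "Determinant.det (mat_of d S) \<noteq> 0"
  shows "distr (gaussian d m S) (lebesgue_d d) (lin_map d M) = gaussian d (lin_map d M m) (congr_mat d M S)"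
  unfolding gaussian_def
proof (rule distr_density_linear_subst[OF M gauss_density_measurable gauss_density_measurable])
  have "Determinant.det (mat_of d M) \<noteq> 0" using M unfolding linear_subst_def det_mat_mat_of by simp
  then show "\<bar>det_mat d M\<bar> * gauss_density d (lin_map d M m) (congr_mat d M S) (lin_map d M x) = gauss_density d m S x"
    for x by (rule gauss_density_lin_map[OF _ dS])
qed

lemma real_sqrt_prod: "finite A \<Longrightarrow> sqrt (prod f A) = (\<Prod>i\<in>A. sqrt (f i))"
  by (induction A rule: finite_induct) (auto simp: real_sqrt_mult)

lemma inv_mat_diagonal:
  assumes diag: "\<forall>i<d. \<forall>j<d. i \<noteq> j \<longrightarrow> S i j = 0" and pos: "\<forall>i<d. S i i > 0"
  shows "\<forall>i<d. \<forall>j<d. inv_mat d S i j = (if i = j then 1 / S i i else 0)"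
proof -
  define D where "D = (\<lambda>i j. if i = j then 1 / S i i else 0 :: real)"
  have det: "det_mat d S = (\<Prod>i<d. S i i)"
    by (rule det_mat_diagonal_off_row[where k=0]) (use diag in auto)
  have "det_mat d S \<noteq> 0" unfolding det using pos by (simp add: prod_zero_iff) fastforce
  then have dS: "Determinant.det (mat_of d S) \<noteq> 0" using det_mat_mat_of by simp
  have SD: "mat_of d S * mat_of d D = 1\<^sub>m d"
  proof -
    have "mat_of d (mat_mul d S D) = mat_of d id_mat"
      unfolding mat_of_eq_iff
    proof (intro allI impI)
      fix i j assume ij: "i < d" "j < d"
      have "mat_mul d S D i j = (\<Sum>k<d. if k = j then S i k * D k j else 0)"
        unfolding mat_mul_def using diag ij by (intro sum.cong) (auto simp: D_def)
      also have "\<dots> = S i j * D j j" using ij by (simp add: sum.delta)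
      also have "\<dots> = id_mat i j" using diag pos ij by (auto simp: D_def id_mat_def)
      finally show "mat_mul d S D i j = id_mat i j" .
    qed
    then show ?thesis by (simp add: mat_of_mat_mul mat_of_id_mat)
  qed
  have "mat_of d (inv_mat d S) = mat_of d (inv_mat d S) * (mat_of d S * mat_of d D)" using SD by simp
  also have "\<dots> = (mat_of d (inv_mat d S) * mat_of d S) * mat_of d D" by (rule assoc_mult_mat[symmetric]) auto
  also have "\<dots> = mat_of d D" using inv_mat_mat_of(2)[OF dS] by simp
  finally show ?thesis unfolding mat_of_eq_iff D_def by simp
qed

lemma dot_inv_mat_diagonal:
  assumes diag: "\<forall>i<d. \<forall>j<d. i \<noteq> j \<longrightarrow> S i j = 0" and pos: "\<forall>i<d. S i i > 0"
  shows "dot d z (mat_vec d (inv_mat d S) z) = (\<Sum>i<d. (z i)^2 / S i i)"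
  unfolding dot_def mat_vec_def
proof (intro sum.cong refl)
  fix i assume i: "i \<in> {..<d}"
  have "(\<Sum>j<d. inv_mat d S i j * z j) = (\<Sum>j<d. if i = j then z j / S i i else 0)"
    using inv_mat_diagonal[OF diag pos] i by (intro sum.cong) auto
  then show "z i * (\<Sum>j<d. inv_mat d S i j * z j) = (z i)^2 / S i i"
    using i by (simp add: power2_eq_square)
qed

lemma gauss_density_diagonal:
  assumes diag: "\<forall>i<d. \<forall>j<d. i \<noteq> j \<longrightarrow> S i j = 0" and pos: "\<forall>i<d. S i i > 0"
  shows "gauss_density d m S x = (\<Prod>i<d. normal_density (m i) (sqrt (S i i)) (x i))"
proof -
  have det: "det_mat d S = (\<Prod>i<d. S i i)"
    by (rule det_mat_diagonal_off_row[where k=0]) (use diag in auto)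
  note q = dot_inv_mat_diagonal[OF diag pos, of "\<lambda>i. x i - m i"]
  have sqrt_det: "sqrt ((2 * pi) ^ d * det_mat d S) = (\<Prod>i<d. sqrt (2 * pi * (sqrt (S i i))^2))"
  proof -
    have "(2 * pi) ^ d * det_mat d S = (\<Prod>i<d. 2 * pi * (sqrt (S i i))^2)"
    proof -
      have "(\<Prod>i<d. S i i) = (\<Prod>i<d. (sqrt (S i i))^2)" using pos by (intro prod.cong) auto
      then show ?thesis unfolding det by (simp add: prod.distrib)
    qed
    then show ?thesis by (simp add: real_sqrt_prod)
  qed
  have "(\<Prod>i<d. normal_density (m i) (sqrt (S i i)) (x i))
      = (\<Prod>i<d. 1 / sqrt (2 * pi * (sqrt (S i i))^2)) * (\<Prod>i<d. exp (- (x i - m i)\<^sup>2 / (2 * (sqrt (S i i))^2)))"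
    unfolding normal_density_def by (rule prod.distrib)
  also have "(\<Prod>i<d. exp (- (x i - m i)\<^sup>2 / (2 * (sqrt (S i i))^2))) = exp (\<Sum>i<d. - (x i - m i)\<^sup>2 / (2 * (sqrt (S i i))^2))"
    by (simp add: exp_sum)
  also have "(\<Sum>i<d. - (x i - m i)\<^sup>2 / (2 * (sqrt (S i i))^2)) = - (1/2) * (\<Sum>i<d. (x i - m i)^2 / S i i)"
  proof -
    have "(\<Sum>i<d. - (x i - m i)\<^sup>2 / (2 * (sqrt (S i i))^2)) = (\<Sum>i<d. - (1/2) * ((x i - m i)^2 / S i i))"
      using pos by (intro sum.cong) auto
    then show ?thesis by (simp add: sum_distrib_left)
  qed
  also have "(\<Prod>i<d. 1 / sqrt (2 * pi * (sqrt (S i i))^2)) = 1 / sqrt ((2 * pi) ^ d * det_mat d S)"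
    unfolding sqrt_det by (simp add: prod_dividef)
  finally show ?thesis unfolding gauss_density_def q by simp
qed

lemma prod_indicator_ennreal:
  "finite I \<Longrightarrow> (\<Prod>i\<in>I. indicator (A i) (x i) :: ennreal) = (if \<forall>i\<in>I. x i \<in> A i then 1 else 0)"
proof (cases "\<forall>i\<in>I. x i \<in> A i")
  case True
  then show ?thesis by (simp add: indicator_def)
next
  case False
  then obtain i where "i \<in> I" "x i \<notin> A i" by auto
  moreover assume "finite I"
  ultimately show ?thesis using False by (subst prod_zero) (auto simp: indicator_def intro!: bexI[of _ i])
qed

lemma density_lebesgue_d_prod:
  assumes f: "\<And>i. i < d \<Longrightarrow> f i \<in> borel_measurable borel" and f0: "\<And>i y. i < d \<Longrightarrow> 0 \<le> f i y"
    and prob: "\<And>i. i < d \<Longrightarrow> prob_space (density lborel (f i))"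
  shows "density (lebesgue_d d) (\<lambda>x. ennreal (\<Prod>i<d. f i (x i))) = PiM {..<d} (\<lambda>i. density lborel (f i))"
proof -
  define N where "N i = (if i < d then density lborel (f i) else density lborel (normal_density 0 1))" for i
  interpret N: product_prob_space N
    by (intro product_prob_spaceI) (simp add: N_def prob prob_space_normal_density)
  interpret P: product_sigma_finite "\<lambda>_::nat. lborel :: real measure" by (rule product_sigma_finite_lborel)
  define F where "F x = ennreal (\<Prod>i<d. f i (x i))" for x :: "nat \<Rightarrow> real"
  have F: "F \<in> borel_measurable (lebesgue_d d)"
    unfolding F_def by (intro measurable_compose[OF _ measurable_ennreal] borel_measurable_prod
        measurable_compose[OF component_measurable_lebesgue_d f]) auto
  have "density (lebesgue_d d) F = PiM {..<d} N"
  proof (rule N.PiM_eqI)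
    show "sets (density (lebesgue_d d) F) = sets (PiM {..<d} N)"
      unfolding lebesgue_d_def sets_density by (intro sets_PiM_cong) (simp_all add: N_def)
  next
    fix A assume "\<And>i. i \<in> {..<d} \<Longrightarrow> A i \<in> sets (N i)"
    then have A: "\<And>i. i \<in> {..<d} \<Longrightarrow> A i \<in> sets borel" by (simp add: N_def)
    have "emeasure (density (lebesgue_d d) F) (PiE {..<d} A) = (\<integral>\<^sup>+x. F x * indicator (PiE {..<d} A) x \<partial>lebesgue_d d)"
      using A unfolding lebesgue_d_def by (intro emeasure_density F[unfolded lebesgue_d_def] sets_PiM_I_finite) auto
    also have "\<dots> = (\<integral>\<^sup>+x. (\<Prod>i<d. ennreal (f i (x i)) * indicator (A i) (x i)) \<partial>lebesgue_d d)"
    proof (rule nn_integral_cong)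
      fix x assume x: "x \<in> space (lebesgue_d d)"
      have "F x = (\<Prod>i<d. ennreal (f i (x i)))" unfolding F_def using f0 by (intro prod_ennreal[symmetric]) simp
      moreover have "indicator (PiE {..<d} A) x = (\<Prod>i<d. indicator (A i) (x i) :: ennreal)"
        using x by (subst prod_indicator_ennreal) (auto simp: space_lebesgue_d PiE_def indicator_def)
      ultimately show "F x * indicator (PiE {..<d} A) x = (\<Prod>i<d. ennreal (f i (x i)) * indicator (A i) (x i))"
        by (simp add: prod.distrib)
    qed
    also have "\<dots> = (\<Prod>i<d. \<integral>\<^sup>+y. ennreal (f i y) * indicator (A i) y \<partial>lborel)"
      unfolding lebesgue_d_def using A f by (intro P.product_nn_integral_prod) auto
    also have "\<dots> = (\<Prod>i<d. emeasure (N i) (A i))"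
      using A f by (intro prod.cong refl) (simp add: N_def emeasure_density)
    finally show "emeasure (density (lebesgue_d d) F) (PiE {..<d} A) = (\<Prod>i<d. emeasure (N i) (A i))" .
  qed simp
  also have "PiM {..<d} N = PiM {..<d} (\<lambda>i. density lborel (f i))" by (rule PiM_cong) (auto simp: N_def)
  finally show ?thesis unfolding F_def .
qed

lemma gaussian_diagonal:
  assumes diag: "\<forall>i<d. \<forall>j<d. i \<noteq> j \<longrightarrow> S i j = 0" and pos: "\<forall>i<d. S i i > 0"
  shows "gaussian d m S = PiM {..<d} (\<lambda>i. density lborel (normal_density (m i) (sqrt (S i i))))"
  unfolding gaussian_def gauss_density_diagonal[OF diag pos]
  using pos by (intro density_lebesgue_d_prod prob_space_normal_density) (auto simp: normal_density_nonneg)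

lemma distr_gaussian_diagonalized:
  assumes pd: "pos_def_mat d S" and g: "linear_subst d M"
    and diag: "\<forall>i<d. \<forall>j<d. i \<noteq> j \<longrightarrow> congr_mat d M S i j = 0"
  shows "distr (gaussian d m S) (lebesgue_d d) (lin_map d M) =
     PiM {..<d} (\<lambda>i. density lborel (normal_density (lin_map d M m i) (sqrt (congr_mat d M S i i))))"
    "\<forall>i<d. congr_mat d M S i i > 0"
proof -
  have pdD: "pos_def_mat d (congr_mat d M S)" by (rule pos_def_congr_mat[OF pd linear_subst_det[OF g]])
  show pos: "\<forall>i<d. congr_mat d M S i i > 0" using pos_def_diag_pos[OF pdD] by auto
  show "distr (gaussian d m S) (lebesgue_d d) (lin_map d M) =
     PiM {..<d} (\<lambda>i. density lborel (normal_density (lin_map d M m i) (sqrt (congr_mat d M S i i))))"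
    unfolding distr_gaussian_lin_map[OF g pos_def_det_nonzero[OF pd]]
    by (rule gaussian_diagonal[OF diag pos])
qed

lemma prob_space_gaussian:
  assumes sym: "symmetric_mat d S" and pd: "pos_def_mat d S"
  shows "prob_space (gaussian d m S)"
proof -
  obtain M where M: "linear_subst d M" "\<forall>i<d. \<forall>j<d. i \<noteq> j \<longrightarrow> congr_mat d M S i j = 0"
    using diagonalizing_congruence[OF sym pd, of "{}"] by auto
  note D = distr_gaussian_diagonalized[OF pd M]
  have pp: "prob_space (PiM {..<d} (\<lambda>i. density lborel (normal_density (lin_map d M m i) (sqrt (congr_mat d M S i i)))))"
    using D(2) by (intro prob_space_PiM prob_space_normal_density) auto
  have hm: "lin_map d M \<in> measurable (gaussian d m S) (lebesgue_d d)" by (simp add: gaussian_def lin_map_measurable)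
  have "emeasure (gaussian d m S) (space (gaussian d m S)) = emeasure (distr (gaussian d m S) (lebesgue_d d) (lin_map d M)) (space (lebesgue_d d))"
    using hm by (subst emeasure_distr) (auto intro!: arg_cong2[where f=emeasure] dest: measurable_space)
  also have "\<dots> = 1" unfolding D(1) using prob_space.emeasure_space_1[OF pp] by (simp add: lebesgue_d_def space_PiM)
  finally show ?thesis by (rule prob_spaceI)
qed

lemma distr_PiM_pair:
  fixes N :: "nat \<Rightarrow> real measure"
  assumes k: "k < d" and l: "l < d" and kl: "k \<noteq> l" and pr: "\<And>i. i < d \<Longrightarrow> prob_space (N i)"
    and sN: "\<And>i. sets (N i) = sets borel"
  shows "distr (PiM {..<d} N) (lborel \<Otimes>\<^sub>M lborel) (\<lambda>y. (y k, y l)) = N k \<Otimes>\<^sub>M N l"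
proof -
  interpret Nk: prob_space "N k" using pr k by auto
  interpret Nl: prob_space "N l" using pr l by auto
  have sp: "space (N i) = UNIV" for i using sets_eq_imp_space_eq[OF sN[of i]] by simp
  have pm: "(\<lambda>y. (y k, y l)) \<in> measurable (PiM {..<d} N) (lborel \<Otimes>\<^sub>M lborel)"
  proof -
    have "(\<lambda>y. y k) \<in> measurable (PiM {..<d} N) (N k)" "(\<lambda>y. y l) \<in> measurable (PiM {..<d} N) (N l)"
      using k l by (auto intro!: measurable_component_singleton)
    then show ?thesis by (intro measurable_Pair) (auto simp: measurable_cong_sets[OF refl sN])
  qed
  show ?thesis
  proof (rule pair_measure_eqI[symmetric])
    show "sigma_finite_measure (N k)" "sigma_finite_measure (N l)" by unfold_locales
    show "sets (N k \<Otimes>\<^sub>M N l) = sets (distr (PiM {..<d} N) (lborel \<Otimes>\<^sub>M lborel) (\<lambda>y. (y k, y l)))"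
      using sN by (simp cong: sets_pair_measure_cong)
  next
    fix A B assume A: "A \<in> sets (N k)" and B: "B \<in> sets (N l)"
    define C where "C i = (if i = k then A else B)" for i
    have "(\<lambda>y. (y k, y l)) -` (A \<times> B) \<inter> space (PiM {..<d} N) = prod_emb {..<d} N {k, l} (PiE {k, l} C)"
      using k l kl by (auto simp: prod_emb_def space_PiM PiE_def Pi_def C_def sp)
    moreover have "A \<times> B \<in> sets (lborel \<Otimes>\<^sub>M lborel)" using A B sN by simp
    ultimately have "emeasure (distr (PiM {..<d} N) (lborel \<Otimes>\<^sub>M lborel) (\<lambda>y. (y k, y l))) (A \<times> B)
        = emeasure (PiM {..<d} N) (prod_emb {..<d} N {k, l} (PiE {k, l} C))"
      by (simp add: emeasure_distr[OF pm])
    also have "\<dots> = (\<Prod>i\<in>{k, l}. emeasure (N i) (C i))"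
      using k l A B by (intro emeasure_PiM_emb pr) (auto simp: C_def)
    finally show "emeasure (N k) A * emeasure (N l) B = emeasure (distr (PiM {..<d} N) (lborel \<Otimes>\<^sub>M lborel) (\<lambda>y. (y k, y l))) (A \<times> B)"
      using kl by (simp add: C_def)
  qed
qed

(* Phi = R2 R1, where R1 replaces row k of the identity by r and R2 replaces row l by the
   coordinates of w with respect to the rows of R1. *)
lemma linear_subst_with_rows:
  assumes k: "k < d" "r k \<noteq> 0" and indep: "\<not> (\<exists>t. \<forall>j<d. w j = t * r j)"
  shows "\<exists>Phi l. linear_subst d Phi \<and> l < d \<and> l \<noteq> k \<and> (\<forall>j<d. Phi k j = r j) \<and> (\<forall>j<d. Phi l j = w j)"
proof -
  define R1 where "R1 = row_mat d k (r k) r"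
  have R1k: "R1 k j = r j" for j by (simp add: R1_def row_mat_def)
  have R1o: "i \<noteq> k \<Longrightarrow> R1 i j = id_mat i j" for i j by (simp add: R1_def row_mat_def)
  define w' where "w' = (\<lambda>j. if j = k then w k / r k else w j - w k * r j / r k)"
  have "\<exists>l<d. l \<noteq> k \<and> w' l \<noteq> 0"
  proof (rule ccontr)
    assume "\<not> ?thesis"
    then have z: "w' j = 0" if "j < d" "j \<noteq> k" for j using that by blast
    have "w j = w k / r k * r j" if "j < d" for j
      using z[OF that] k by (cases "j = k") (auto simp: w'_def field_simps)
    then show False using indep by blast
  qed
  then obtain l where l: "l < d" "l \<noteq> k" "w' l \<noteq> 0" by blast
  define R2 where "R2 = row_mat d l (w' l) w'"
  have R2l: "R2 l j = w' j" for j by (simp add: R2_def row_mat_def)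
  have R2o: "i \<noteq> l \<Longrightarrow> R2 i j = id_mat i j" for i j by (simp add: R2_def row_mat_def)
  have "linear_subst d (mat_mul d R2 R1)" unfolding R1_def R2_def
    by (intro linear_subst_mat_mul linear_subst_row_mat k l)
  moreover have "mat_mul d R2 R1 k j = r j" if "j < d" for j
    using mat_mul_id_row[of d R2 k R1 j] R2o l(2) k(1) by (simp add: R1k)
  moreover have "mat_mul d R2 R1 l j = w j" if j: "j < d" for j
  proof -
    have "mat_mul d R2 R1 l j = w' k * R1 k j + (\<Sum>m\<in>{..<d} - {k}. w' m * R1 m j)"
      unfolding mat_mul_def R2l using k by (intro sum.remove) auto
    also have "(\<Sum>m\<in>{..<d} - {k}. w' m * R1 m j) = (\<Sum>m\<in>{..<d} - {k}. if m = j then w' m else 0)"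
      by (intro sum.cong) (auto simp: R1o id_mat_def)
    also have "w' k * R1 k j + \<dots> = w j"
      using k j by (auto simp: R1k w'_def field_simps)
    finally show ?thesis .
  qed
  ultimately show ?thesis using l by blast
qed

lemma distr_gaussian_coordinate_pair:
  assumes pd: "pos_def_mat d S" and M: "linear_subst d M"
    and diag: "\<forall>i<d. \<forall>j<d. i \<noteq> j \<longrightarrow> congr_mat d M S i j = 0"
    and k: "k < d" and l: "l < d" and kl: "k \<noteq> l"
  shows "distr (gaussian d m S) (lborel \<Otimes>\<^sub>M lborel) (\<lambda>x. (lin_map d M x k, lin_map d M x l)) =
     density lborel (normal_density (lin_map d M m k) (sqrt (congr_mat d M S k k))) \<Otimes>\<^sub>M
     density lborel (normal_density (lin_map d M m l) (sqrt (congr_mat d M S l l)))"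
proof -
  note D = distr_gaussian_diagonalized[OF pd M diag]
  have hm: "lin_map d M \<in> measurable (gaussian d m S) (lebesgue_d d)"
    by (simp add: gaussian_def lin_map_measurable)
  have pm: "(\<lambda>y. (y k, y l)) \<in> measurable (lebesgue_d d) (lborel \<Otimes>\<^sub>M lborel)"
    unfolding lebesgue_d_def using k l by (intro measurable_Pair) (auto intro!: measurable_component_singleton)
  have "distr (gaussian d m S) (lborel \<Otimes>\<^sub>M lborel) (\<lambda>x. (lin_map d M x k, lin_map d M x l))
      = distr (distr (gaussian d m S) (lebesgue_d d) (lin_map d M)) (lborel \<Otimes>\<^sub>M lborel) (\<lambda>y. (y k, y l))"
    by (subst distr_distr[OF pm hm]) (simp add: comp_def)
  also have "\<dots> = density lborel (normal_density (lin_map d M m k) (sqrt (congr_mat d M S k k))) \<Otimes>\<^sub>M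
      density lborel (normal_density (lin_map d M m l) (sqrt (congr_mat d M S l l)))"
    unfolding D(1)
    by (rule distr_PiM_pair[OF k l kl]) (use D(2) in \<open>auto intro: prob_space_normal_density\<close>)
  finally show ?thesis .
qed

lemma distr_gaussian_pair:
  assumes sym: "symmetric_mat d S" and pd: "pos_def_mat d S"
    and rk: "\<exists>i<d. r i \<noteq> 0" and wk: "\<exists>i<d. w i \<noteq> 0" and orth: "bilin d S r w = 0"
  shows "distr (gaussian d m S) (lborel \<Otimes>\<^sub>M lborel) (\<lambda>x. (dot d r x, dot d w x)) =
     density lborel (normal_density (dot d r m) (sqrt (bilin d S r r))) \<Otimes>\<^sub>M
     density lborel (normal_density (dot d w m) (sqrt (bilin d S w w)))"
proof -
  obtain k where k: "k < d" "r k \<noteq> 0" using rk by blast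
  have "\<not> (\<exists>t. \<forall>j<d. w j = t * r j)"
  proof
    assume "\<exists>t. \<forall>j<d. w j = t * r j"
    then obtain t where t: "\<forall>j<d. w j = t * r j + 0 * r j" by auto
    then have "bilin d S r w = t * bilin d S r r"
      using bilin_lin_right[of d S r t r 0 r] by (simp add: bilin_cong[of d r r w "\<lambda>j. t * r j + 0 * r j"])
    then have "t = 0" using orth pos_def_bilin_pos[OF pd rk] by simp
    then show False using t wk by auto
  qed
  then obtain Phi l where Phi: "linear_subst d Phi" "l < d" "l \<noteq> k"
      "\<forall>j<d. Phi k j = r j" "\<forall>j<d. Phi l j = w j"
    using linear_subst_with_rows[of k d r w] k by blast
  define S1 where "S1 = congr_mat d Phi S"
  have sym1: "symmetric_mat d S1" unfolding S1_def by (rule symmetric_congr_mat[OF sym])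
  have pd1: "pos_def_mat d S1" unfolding S1_def by (rule pos_def_congr_mat[OF pd linear_subst_det[OF Phi(1)]])
  have "S1 k l = bilin d S r w"
    unfolding S1_def congr_mat_entry using Phi(4,5) by (intro bilin_cong) auto
  then have "S1 k l = 0" "S1 l k = 0" using orth sym1 k Phi(2) unfolding symmetric_mat_def by auto
  then obtain M' where M': "linear_subst d M'" "\<forall>i<d. \<forall>j<d. i \<noteq> j \<longrightarrow> congr_mat d M' S1 i j = 0"
      "\<forall>q\<in>{k,l}. \<forall>j<d. M' q j = id_mat q j"
    using diagonalizing_congruence[OF sym1 pd1, of "{k,l}"] k Phi(2) by auto
  define M where "M = mat_mul d M' Phi"
  have M: "linear_subst d M" unfolding M_def by (rule linear_subst_mat_mul[OF M'(1) Phi(1)])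
  have diag: "\<forall>i<d. \<forall>j<d. i \<noteq> j \<longrightarrow> congr_mat d M S i j = 0"
    using M'(2) unfolding M_def S1_def by (simp add: congr_mat_mat_mul)
  have Mk: "M k j = r j" and Ml: "M l j = w j" if "j < d" for j
    unfolding M_def using mat_mul_id_row M'(3) k(1) Phi(2,4,5) that by auto
  have "(\<lambda>x. (dot d r x, dot d w x)) = (\<lambda>x. (lin_map d M x k, lin_map d M x l))"
    using k(1) Phi(2) Mk Ml by (auto simp: lin_map_def dot_def)
  moreover have "congr_mat d M S k k = bilin d S r r" "congr_mat d M S l l = bilin d S w w"
    unfolding congr_mat_entry using Mk Ml by (auto intro: bilin_cong)
  moreover have "lin_map d M m k = dot d r m" "lin_map d M m l = dot d w m"
    using k(1) Phi(2) Mk Ml by (simp_all add: lin_map_def dot_def)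
  ultimately show ?thesis
    using distr_gaussian_coordinate_pair[OF pd M diag k(1) Phi(2) Phi(3)[symmetric]] by simp
qed

section \<open>Estimates for one-dimensional normal laws\<close>

lemma emeasure_density_interval_le:
  fixes f :: "real \<Rightarrow> real"
  assumes f[measurable]: "f \<in> borel_measurable borel"
    and rho: "\<rho> \<ge> 0" and B: "\<And>s. \<bar>s - x0\<bar> \<le> \<rho> \<Longrightarrow> f s \<le> B"
  shows "emeasure (density lborel f) {s. \<bar>s - x0\<bar> \<le> \<rho>} \<le> ennreal (2 * \<rho> * B)"
proof -
  have eq: "{s. \<bar>s - x0\<bar> \<le> \<rho>} = {x0 - \<rho> .. x0 + \<rho>}" by auto
  have "emeasure (density lborel f) {x0 - \<rho> .. x0 + \<rho>} = (\<integral>\<^sup>+s. ennreal (f s) * indicator {x0 - \<rho> .. x0 + \<rho>} s \<partial>lborel)"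
    by (rule emeasure_density) auto
  also have "\<dots> \<le> (\<integral>\<^sup>+s. ennreal B * indicator {x0 - \<rho> .. x0 + \<rho>} s \<partial>lborel)"
    by (intro nn_integral_mono) (auto simp: indicator_def intro!: ennreal_leI B)
  also have "\<dots> = ennreal B * emeasure lborel {x0 - \<rho> .. x0 + \<rho>}"
    by (rule nn_integral_cmult_indicator) simp
  also have "\<dots> = ennreal B * ennreal (2 * \<rho>)" using rho by simp
  also have "\<dots> \<le> ennreal (2 * \<rho> * B)"
  proof (cases "B \<ge> 0")
    case True then show ?thesis by (simp add: ennreal_mult'[symmetric] mult.commute)
  next
    case False then show ?thesis by (simp add: ennreal_neg)
  qed
  finally show ?thesis unfolding eq .
qed

lemma normal_density_le: "\<sigma> > 0 \<Longrightarrow> normal_density \<mu> \<sigma> s \<le> 1 / (sqrt (2 * pi) * \<sigma>)"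
proof -
  assume s: "\<sigma> > 0"
  have "normal_density \<mu> \<sigma> s = 1 / (sqrt (2 * pi) * \<sigma>) * exp (- (s - \<mu>)\<^sup>2 / (2 * \<sigma>\<^sup>2))"
    using s by (simp add: normal_density_def real_sqrt_mult)
  also have "\<dots> \<le> 1 / (sqrt (2 * pi) * \<sigma>) * 1"
    using s by (intro mult_left_mono) auto
  finally show ?thesis by simp
qed

lemma normal_density_le_far:
  assumes s: "\<sigma> > 0" and far: "\<bar>s - \<mu>\<bar> \<ge> r" and r: "r \<ge> 0"
  shows "normal_density \<mu> \<sigma> s \<le> exp (- r\<^sup>2 / (2 * \<sigma>\<^sup>2)) / (sqrt (2 * pi) * \<sigma>)"
proof -
  have "r\<^sup>2 \<le> (s - \<mu>)\<^sup>2" using far r by (metis abs_le_square_iff abs_of_nonneg)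
  then have "- (s - \<mu>)\<^sup>2 / (2 * \<sigma>\<^sup>2) \<le> - r\<^sup>2 / (2 * \<sigma>\<^sup>2)" using s by (simp add: divide_right_mono)
  then have "exp (- (s - \<mu>)\<^sup>2 / (2 * \<sigma>\<^sup>2)) \<le> exp (- r\<^sup>2 / (2 * \<sigma>\<^sup>2))" by simp
  then show ?thesis using s by (simp add: normal_density_def real_sqrt_mult divide_right_mono)
qed

lemma mult_exp_neg_square_le: "y \<ge> 0 \<Longrightarrow> y * exp (- y\<^sup>2 / 8) \<le> (2::real)"
proof -
  assume y: "y \<ge> 0"
  have "1 + y\<^sup>2 / 8 \<le> exp (y\<^sup>2 / 8)" by (rule exp_ge_add_one_self)
  moreover have "y / 2 \<le> 1 + y\<^sup>2 / 8"
  proof -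
    have "0 \<le> (y - 2)\<^sup>2 + 4" by simp
    then show ?thesis by (simp add: power2_eq_square algebra_simps)
  qed
  ultimately have "y / 2 \<le> exp (y\<^sup>2 / 8)" by linarith
  then have "y \<le> 2 * exp (y\<^sup>2 / 8)" by simp
  then have "y * exp (- y\<^sup>2 / 8) \<le> 2 * exp (y\<^sup>2 / 8) * exp (- y\<^sup>2 / 8)"
    by (intro mult_right_mono) auto
  also have "\<dots> = 2" by (simp add: exp_minus[symmetric] mult.assoc exp_add[symmetric])
  finally show ?thesis .
qed

lemma sqrt_2pi_ge: "sqrt (2 * pi) \<ge> 16 / 7"
proof -
  have "(16/7)\<^sup>2 \<le> 2 * pi" using pi_gt3 by (simp add: power2_eq_square)
  then have "sqrt ((16/7)\<^sup>2) \<le> sqrt (2 * pi)" by (rule real_sqrt_le_mono)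
  then show ?thesis by simp
qed

lemma interval_abs_sets: "{s::real. \<bar>s - x0\<bar> \<le> r} \<in> sets borel"
proof -
  have "{s::real. \<bar>s - x0\<bar> \<le> r} = {x0 - r .. x0 + r}" by auto
  then show ?thesis by simp
qed

lemma band_imp_window:
  fixes u a t \<beta> :: real
  assumes b: "\<bar>\<beta>\<bar> \<le> 1/8" and h: "\<bar>u + a\<bar> \<le> \<bar>\<beta> * u + t\<bar>"
  shows "\<bar>u + a\<bar> \<le> 16/7 * \<bar>\<beta>\<bar> * \<bar>a\<bar> \<or> \<bar>u + a\<bar> \<le> 16/7 * \<bar>t\<bar>"
proof -
  have "\<bar>u + a\<bar> \<le> \<bar>\<beta>\<bar> * \<bar>u\<bar> + \<bar>t\<bar>"
    using h abs_triangle_ineq[of "\<beta> * u" t] by (simp add: abs_mult)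
  moreover have "\<bar>\<beta>\<bar> * \<bar>u\<bar> \<le> \<bar>\<beta>\<bar> * \<bar>u + a\<bar> + \<bar>\<beta>\<bar> * \<bar>a\<bar>"
    using mult_left_mono[OF abs_triangle_ineq4[of "u + a" a] abs_ge_zero[of \<beta>]] by (simp add: distrib_left)
  moreover have "\<bar>\<beta>\<bar> * \<bar>u + a\<bar> \<le> 1/8 * \<bar>u + a\<bar>" using b by (intro mult_right_mono) auto
  ultimately have "7/8 * \<bar>u + a\<bar> \<le> \<bar>\<beta>\<bar> * \<bar>a\<bar> + \<bar>t\<bar>" by linarith
  moreover have "7/8 * X \<le> P + T \<Longrightarrow> X \<le> 16/7 * P \<or> X \<le> 16/7 * T" for X P T :: real
    by linarith
  ultimately show ?thesis by (simp add: mult.assoc)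
qed

lemma normal_window_le:
  assumes s: "\<sigma> > 0" and \<rho>: "\<rho> \<ge> 0"
  shows "emeasure (density lborel (normal_density \<mu> \<sigma>)) {s. \<bar>s - x0\<bar> \<le> \<rho>} \<le> ennreal (7/8 * \<rho> / \<sigma>)"
proof -
  have "emeasure (density lborel (normal_density \<mu> \<sigma>)) {s. \<bar>s - x0\<bar> \<le> \<rho>}
      \<le> ennreal (2 * \<rho> * (1 / (sqrt (2 * pi) * \<sigma>)))"
    by (rule emeasure_density_interval_le) (auto simp: \<rho> normal_density_le[OF s])
  also have "2 * \<rho> * (1 / (sqrt (2 * pi) * \<sigma>)) \<le> 2 * \<rho> * (1 / (16/7 * \<sigma>))"
  proof -
    have "16/7 * \<sigma> \<le> sqrt (2 * pi) * \<sigma>" using sqrt_2pi_ge s by (intro mult_right_mono) auto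
    then have "1 / (sqrt (2 * pi) * \<sigma>) \<le> 1 / (16/7 * \<sigma>)" using s by (intro divide_left_mono) auto
    then show ?thesis using \<rho> by (intro mult_left_mono) auto
  qed
  also have "\<dots> = 7/8 * \<rho> / \<sigma>" by simp
  finally show ?thesis by (simp add: ennreal_leI)
qed

(* The window lies at distance at least |a|/2 from the mean, and y exp (-y^2/8) <= 2 for
   y = |a|/sigma absorbs the factor |a| in its length. *)
lemma normal_far_window_le:
  assumes s: "\<sigma> > 0" and b: "\<bar>\<beta>\<bar> \<le> 1/8"
  shows "emeasure (density lborel (normal_density \<mu> \<sigma>)) {s. \<bar>s - (\<mu> - a)\<bar> \<le> 16/7 * \<bar>\<beta>\<bar> * \<bar>a\<bar>}
     \<le> ennreal (4 * \<bar>\<beta>\<bar>)"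
proof -
  define \<rho> where "\<rho> = 16/7 * \<bar>\<beta>\<bar> * \<bar>a\<bar>"
  define B where "B = exp (- (\<bar>a\<bar>/2)\<^sup>2 / (2 * \<sigma>\<^sup>2)) / (sqrt (2 * pi) * \<sigma>)"
  have \<rho>: "\<rho> \<ge> 0" "\<rho> \<le> 2/7 * \<bar>a\<bar>"
    using mult_right_mono[OF b abs_ge_zero[of a]] unfolding \<rho>_def by auto
  have "emeasure (density lborel (normal_density \<mu> \<sigma>)) {s. \<bar>s - (\<mu> - a)\<bar> \<le> \<rho>} \<le> ennreal (2 * \<rho> * B)"
  proof (rule emeasure_density_interval_le[OF _ \<rho>(1)])
    fix s assume "\<bar>s - (\<mu> - a)\<bar> \<le> \<rho>"
    then have "\<bar>s - \<mu>\<bar> \<ge> \<bar>a\<bar> / 2" using \<rho>(2) by linarith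
    then show "normal_density \<mu> \<sigma> s \<le> B" unfolding B_def by (rule normal_density_le_far[OF s]) simp
  qed simp
  also have "2 * \<rho> * B \<le> 4 * \<bar>\<beta>\<bar>"
  proof -
    define y where "y = \<bar>a\<bar> / \<sigma>"
    have y: "y \<ge> 0" using s by (simp add: y_def)
    have e: "(\<bar>a\<bar>/2)\<^sup>2 / (2 * \<sigma>\<^sup>2) = y\<^sup>2 / 8" using s by (simp add: y_def power_divide field_simps)
    have "2 * \<rho> * B = 32/7 * \<bar>\<beta>\<bar> * (y * exp (- y\<^sup>2 / 8)) / sqrt (2 * pi)"
      unfolding \<rho>_def B_def minus_divide_left[symmetric] e using s by (simp add: y_def field_simps)
    also have "\<dots> \<le> 32/7 * \<bar>\<beta>\<bar> * 2 / (16/7)"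
      using mult_exp_neg_square_le[OF y] sqrt_2pi_ge by (intro frac_le mult_left_mono) auto
    finally show ?thesis by simp
  qed
  finally show ?thesis unfolding \<rho>_def by (simp add: ennreal_leI)
qed

lemma normal_band_prob_le:
  assumes s: "\<sigma> > 0"
  shows "emeasure (density lborel (normal_density \<mu> \<sigma>)) {s. \<bar>s - \<mu> + a\<bar> \<le> \<bar>\<beta> * (s - \<mu>) + t\<bar>}
     \<le> ennreal (8 * \<bar>\<beta>\<bar> + 4 * \<bar>t\<bar> / \<sigma>)"
proof -
  let ?N = "density lborel (normal_density \<mu> \<sigma>)"
  let ?A = "{s. \<bar>s - \<mu> + a\<bar> \<le> \<bar>\<beta> * (s - \<mu>) + t\<bar>}"
  interpret N: prob_space ?N by (rule prob_space_normal_density[OF s])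
  have t: "0 \<le> \<bar>t\<bar> / \<sigma>" using s by simp
  show ?thesis
  proof (cases "\<bar>\<beta>\<bar> \<le> 1/8")
    case False
    then have "1 \<le> 8 * \<bar>\<beta>\<bar> + 4 * \<bar>t\<bar> / \<sigma>" using t by linarith
    then show ?thesis by (intro order_trans[OF N.emeasure_le_1]) simp
  next
    case True
    define G1 G2 where "G1 = {s. \<bar>s - (\<mu> - a)\<bar> \<le> 16/7 * \<bar>\<beta>\<bar> * \<bar>a\<bar>}" and "G2 = {s. \<bar>s - (\<mu> - a)\<bar> \<le> 16/7 * \<bar>t\<bar>}"
    have G: "G1 \<in> sets ?N" "G2 \<in> sets ?N" unfolding G1_def G2_def by (simp_all add: interval_abs_sets)
    have "?A \<subseteq> G1 \<union> G2"
    proof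
      fix s assume "s \<in> ?A"
      then have "\<bar>(s - \<mu>) + a\<bar> \<le> \<bar>\<beta> * (s - \<mu>) + t\<bar>" by simp
      then have "\<bar>(s - \<mu>) + a\<bar> \<le> 16/7 * \<bar>\<beta>\<bar> * \<bar>a\<bar> \<or> \<bar>(s - \<mu>) + a\<bar> \<le> 16/7 * \<bar>t\<bar>"
        by (rule band_imp_window[OF True])
      moreover have "s - (\<mu> - a) = (s - \<mu>) + a" by simp
      ultimately show "s \<in> G1 \<union> G2" by (simp only: G1_def G2_def mem_Collect_eq Un_iff)
    qed
    then have "emeasure ?N ?A \<le> emeasure ?N (G1 \<union> G2)" by (rule emeasure_mono) (use G in simp)
    also have "\<dots> \<le> emeasure ?N G1 + emeasure ?N G2" by (rule emeasure_subadditive[OF G])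
    also have "\<dots> \<le> ennreal (4 * \<bar>\<beta>\<bar>) + ennreal (7/8 * (16/7 * \<bar>t\<bar>) / \<sigma>)"
      unfolding G1_def G2_def by (intro add_mono normal_far_window_le normal_window_le s True) simp
    also have "\<dots> = ennreal (4 * \<bar>\<beta>\<bar> + 2 * \<bar>t\<bar> / \<sigma>)"
      using t by (subst ennreal_plus) auto
    also have "\<dots> \<le> ennreal (8 * \<bar>\<beta>\<bar> + 4 * \<bar>t\<bar> / \<sigma>)"
      using t by (intro ennreal_leI) simp
    finally show ?thesis .
  qed
qed

lemma normal_abs_moment_le:
  assumes s: "\<sigma> > 0"
  shows "(\<integral>\<^sup>+t. ennreal \<bar>t - \<mu>\<bar> \<partial>density lborel (normal_density \<mu> \<sigma>)) \<le> ennreal \<sigma>"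
proof -
  have "(\<integral>\<^sup>+t. ennreal \<bar>t - \<mu>\<bar> \<partial>density lborel (normal_density \<mu> \<sigma>))
      = (\<integral>\<^sup>+t. ennreal (normal_density \<mu> \<sigma> t) * ennreal \<bar>t - \<mu>\<bar> \<partial>lborel)"
    by (rule nn_integral_density) auto
  also have "\<dots> = (\<integral>\<^sup>+t. ennreal (normal_density \<mu> \<sigma> t * \<bar>t - \<mu>\<bar>) \<partial>lborel)"
    by (intro nn_integral_cong) (simp add: ennreal_mult')
  also have "\<dots> = ennreal (integral\<^sup>L lborel (\<lambda>t. normal_density \<mu> \<sigma> t * \<bar>t - \<mu>\<bar>))"
  proof (rule nn_integral_eq_integral)
    show "integrable lborel (\<lambda>t. normal_density \<mu> \<sigma> t * \<bar>t - \<mu>\<bar>)"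
      using integrable_normal_moment_abs[OF s, of \<mu> 1] by simp
  qed (simp add: normal_density_nonneg)
  also have "integral\<^sup>L lborel (\<lambda>t. normal_density \<mu> \<sigma> t * \<bar>t - \<mu>\<bar>) = \<sigma> * sqrt (2 / pi)"
    using integral_normal_moment_abs_odd[OF s, of \<mu> 0] by simp
  also have "ennreal (\<sigma> * sqrt (2 / pi)) \<le> ennreal \<sigma>"
  proof (rule ennreal_leI)
    have "2 / pi \<le> 1" using pi_gt3 by simp
    then have "sqrt (2 / pi) \<le> 1" by simp
    then show "\<sigma> * sqrt (2 / pi) \<le> \<sigma>" using s by (simp add: mult_left_le)
  qed
  finally show ?thesis .
qed

lemma normal_band_section_le:
  assumes s1: "\<sigma>1 > 0"
  shows "emeasure (density lborel (normal_density \<mu>1 \<sigma>1)) {s. \<bar>s + c\<bar> \<le> \<bar>\<beta> * s + t\<bar>}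
     \<le> ennreal (8 * \<bar>\<beta>\<bar> + 4 * \<bar>\<beta> * \<mu>1 + \<mu>2\<bar> / \<sigma>1) + ennreal (4 / \<sigma>1) * ennreal \<bar>t - \<mu>2\<bar>"
proof -
  define K where "K = 8 * \<bar>\<beta>\<bar> + 4 * \<bar>\<beta> * \<mu>1 + \<mu>2\<bar> / \<sigma>1"
  have "{s. \<bar>s + c\<bar> \<le> \<bar>\<beta> * s + t\<bar>} = {s. \<bar>s - \<mu>1 + (\<mu>1 + c)\<bar> \<le> \<bar>\<beta> * (s - \<mu>1) + (\<beta> * \<mu>1 + t)\<bar>}"
    by (auto simp: algebra_simps)
  also have "emeasure (density lborel (normal_density \<mu>1 \<sigma>1)) \<dots>
      \<le> ennreal (8 * \<bar>\<beta>\<bar> + 4 * \<bar>\<beta> * \<mu>1 + t\<bar> / \<sigma>1)"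
    by (rule normal_band_prob_le[OF s1])
  also have "\<dots> \<le> ennreal (K + 4 / \<sigma>1 * \<bar>t - \<mu>2\<bar>)"
  proof (rule ennreal_leI)
    have "\<bar>\<beta> * \<mu>1 + t\<bar> \<le> \<bar>\<beta> * \<mu>1 + \<mu>2\<bar> + \<bar>t - \<mu>2\<bar>" by linarith
    then have "4 * \<bar>\<beta> * \<mu>1 + t\<bar> / \<sigma>1 \<le> 4 * (\<bar>\<beta> * \<mu>1 + \<mu>2\<bar> + \<bar>t - \<mu>2\<bar>) / \<sigma>1"
      using s1 by (intro divide_right_mono) auto
    then show "8 * \<bar>\<beta>\<bar> + 4 * \<bar>\<beta> * \<mu>1 + t\<bar> / \<sigma>1 \<le> K + 4 / \<sigma>1 * \<bar>t - \<mu>2\<bar>"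
      unfolding K_def by (simp add: add_divide_distrib algebra_simps)
  qed
  also have "\<dots> = ennreal K + ennreal (4 / \<sigma>1 * \<bar>t - \<mu>2\<bar>)"
    using s1 by (intro ennreal_plus) (auto simp: K_def)
  also have "ennreal (4 / \<sigma>1 * \<bar>t - \<mu>2\<bar>) = ennreal (4 / \<sigma>1) * ennreal \<bar>t - \<mu>2\<bar>"
    using s1 by (intro ennreal_mult) auto
  finally show ?thesis unfolding K_def .
qed

(* Fubini: integrate the bound for the section at W = t against the law of W, whose first
   absolute central moment is at most its standard deviation. *)
lemma indep_normals_band_prob_le:
  assumes s1: "\<sigma>1 > 0" and s2: "\<sigma>2 > 0"
  shows "measure (density lborel (normal_density \<mu>1 \<sigma>1) \<Otimes>\<^sub>M density lborel (normal_density \<mu>2 \<sigma>2))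
      {z. \<bar>fst z + c\<bar> \<le> \<bar>\<beta> * fst z + snd z\<bar>} \<le> 8 * \<bar>\<beta>\<bar> + 4 * (\<bar>\<beta> * \<mu>1 + \<mu>2\<bar> + \<sigma>2) / \<sigma>1"
proof -
  define N1 N2 where "N1 = density lborel (normal_density \<mu>1 \<sigma>1)" and "N2 = density lborel (normal_density \<mu>2 \<sigma>2)"
  interpret N1: prob_space N1 unfolding N1_def by (rule prob_space_normal_density[OF s1])
  interpret N2: prob_space N2 unfolding N2_def by (rule prob_space_normal_density[OF s2])
  interpret P: pair_prob_space N1 N2 by unfold_locales
  define F where "F = {z. \<bar>fst z + c\<bar> \<le> \<bar>\<beta> * fst z + snd z\<bar>}"
  define K where "K = 8 * \<bar>\<beta>\<bar> + 4 * \<bar>\<beta> * \<mu>1 + \<mu>2\<bar> / \<sigma>1"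
  have F: "F \<in> sets (N1 \<Otimes>\<^sub>M N2)"
  proof -
    have "F = {z \<in> space (N1 \<Otimes>\<^sub>M N2). \<bar>fst z + c\<bar> \<le> \<bar>\<beta> * fst z + snd z\<bar>}"
      by (auto simp: F_def space_pair_measure N1_def N2_def)
    also have "\<dots> \<in> sets (N1 \<Otimes>\<^sub>M N2)" unfolding N1_def N2_def by measurable
    finally show ?thesis .
  qed
  have m: "(\<lambda>t. ennreal \<bar>t - \<mu>2\<bar>) \<in> borel_measurable N2" unfolding N2_def by measurable
  have "emeasure (N1 \<Otimes>\<^sub>M N2) F = (\<integral>\<^sup>+t. emeasure N1 ((\<lambda>s. (s, t)) -` F) \<partial>N2)"
    by (rule P.emeasure_pair_measure_alt2[OF F])
  also have "\<dots> \<le> (\<integral>\<^sup>+t. ennreal K + ennreal (4 / \<sigma>1) * ennreal \<bar>t - \<mu>2\<bar> \<partial>N2)"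
    unfolding N1_def K_def F_def using normal_band_section_le[OF s1] by (intro nn_integral_mono) simp
  also have "\<dots> = ennreal K + ennreal (4 / \<sigma>1) * (\<integral>\<^sup>+t. ennreal \<bar>t - \<mu>2\<bar> \<partial>N2)"
    using m N2.emeasure_space_1 by (simp add: nn_integral_add nn_integral_cmult)
  also have "\<dots> \<le> ennreal K + ennreal (4 / \<sigma>1) * ennreal \<sigma>2"
    unfolding N2_def by (intro add_left_mono mult_left_mono normal_abs_moment_le[OF s2]) auto
  also have "\<dots> = ennreal (8 * \<bar>\<beta>\<bar> + 4 * (\<bar>\<beta> * \<mu>1 + \<mu>2\<bar> + \<sigma>2) / \<sigma>1)"
    using s1 s2 by (simp add: ennreal_plus ennreal_mult'[symmetric] K_def add_divide_distrib algebra_simps)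
  finally have "emeasure (N1 \<Otimes>\<^sub>M N2) F \<le> ennreal (8 * \<bar>\<beta>\<bar> + 4 * (\<bar>\<beta> * \<mu>1 + \<mu>2\<bar> + \<sigma>2) / \<sigma>1)" .
  then show ?thesis
    using s1 s2 unfolding N1_def N2_def F_def measure_def by (simp add: enn2real_leI)
qed

section \<open>The disagreement probability\<close>

lemma dot_measurable_lebesgue_d[measurable]: "(\<lambda>x. dot d r x) \<in> borel_measurable (lebesgue_d d)"
  unfolding dot_def by (rule linear_form_measurable)

lemma dot_decomposition:
  assumes "\<forall>i<d. v i = \<beta> * r i + w i"
  shows "dot d v x = \<beta> * dot d r x + dot d w x"
  using assms by (simp add: dot_def sum.distrib sum_distrib_left algebra_simps)

lemma bilin_orthogonal_decomposition:
  assumes "bilin d S r r \<noteq> 0"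
  shows "\<exists>\<beta> w. bilin d S r w = 0 \<and> (\<forall>i<d. v i = \<beta> * r i + w i)"
proof -
  define \<beta> where "\<beta> = bilin d S r v / bilin d S r r"
  have "bilin d S r (\<lambda>i. 1 * v i + (- \<beta>) * r i) = 0"
    unfolding bilin_lin_right \<beta>_def using assms by simp
  then show ?thesis by (intro exI[of _ \<beta>] exI[of _ "\<lambda>i. 1 * v i + (- \<beta>) * r i"]) auto
qed

lemma bilin_pythagoras:
  assumes sym: "symmetric_mat d S" and orth: "bilin d S r w = 0" and v: "\<forall>i<d. v i = \<beta> * r i + w i"
  shows "bilin d S v v = \<beta>^2 * bilin d S r r + bilin d S w w"
proof -
  have "bilin d S v v = bilin d S (\<lambda>i. \<beta> * r i + 1 * w i) (\<lambda>i. \<beta> * r i + 1 * w i)"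
    using v by (intro bilin_cong) auto
  also have "\<dots> = \<beta> * (\<beta> * bilin d S r r + bilin d S r w) + (\<beta> * bilin d S w r + bilin d S w w)"
    unfolding bilin_lin_left bilin_lin_right by simp
  finally show ?thesis using orth bilin_sym[OF sym, of w r] by (simp add: power2_eq_square)
qed

lemma unit_vectors_multiple_cases:
  assumes r: "sqnorm d r = 1" and rh: "sqnorm d rh = 1" and v: "\<forall>i<d. r i - rh i = \<beta> * r i"
  shows "\<beta> = 0 \<or> \<beta> = 2"
proof -
  have "\<forall>i<d. rh i = (1 - \<beta>) * r i" using v by (auto simp: algebra_simps)
  then have "sqnorm d rh = (1 - \<beta>)^2 * sqnorm d r"
    unfolding sqnorm_def by (simp add: sum_distrib_left power_mult_distrib)
  then have "(1 - \<beta>)^2 = 1" using r rh by simp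
  then show ?thesis by (auto simp: power2_eq_square algebra_simps)
qed

lemma vnorm_opposite_unit:
  assumes "sqnorm d r = 1" "\<forall>i<d. v i = 2 * r i"
  shows "vnorm d v = 2"
proof -
  have "sqnorm d v = 4 * sqnorm d r"
    using assms(2) unfolding sqnorm_def by (simp add: sum_distrib_left power_mult_distrib)
  then show ?thesis using assms(1) unfolding vnorm_sqnorm by simp
qed

lemma pos_neq_imp_abs_le: "pos A \<noteq> pos B \<Longrightarrow> \<bar>A\<bar> \<le> \<bar>A - B\<bar>"
  unfolding pos_def by (auto split: if_splits)

lemma disagreement_subset_band:
  "{x \<in> A. pos (dot d r x + c) \<noteq> pos (dot d rh x + c)}
     \<subseteq> {x \<in> A. \<bar>dot d r x + c\<bar> \<le> \<bar>dot d (\<lambda>i. r i - rh i) x\<bar>}"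
  using pos_neq_imp_abs_le[of "dot d r _ + c" "dot d rh _ + c"] by (auto simp: dot_diff_left)

lemma gaussian_band_prob_le:
  assumes sym: "symmetric_mat d S" and pd: "pos_def_mat d S"
    and r: "\<exists>i<d. r i \<noteq> 0" and w: "\<exists>i<d. w i \<noteq> 0" and orth: "bilin d S r w = 0"
  shows "measure (gaussian d \<mu> S)
           {x \<in> space (gaussian d \<mu> S). \<bar>dot d r x + c\<bar> \<le> \<bar>\<beta> * dot d r x + dot d w x\<bar>}
     \<le> 8 * \<bar>\<beta>\<bar> + 4 * (\<bar>\<beta> * dot d r \<mu> + dot d w \<mu>\<bar> + sqrt (bilin d S w w)) / sqrt (bilin d S r r)"
proof -
  let ?G = "gaussian d \<mu> S" and ?\<phi> = "\<lambda>x. (dot d r x, dot d w x)"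
  define F where "F = {z :: real \<times> real. \<bar>fst z + c\<bar> \<le> \<bar>\<beta> * fst z + snd z\<bar>}"
  have F: "F \<in> sets (lborel \<Otimes>\<^sub>M lborel)"
  proof -
    have "F = {z \<in> space (lborel \<Otimes>\<^sub>M lborel). \<bar>fst z + c\<bar> \<le> \<bar>\<beta> * fst z + snd z\<bar>}"
      by (auto simp: F_def space_pair_measure)
    also have "\<dots> \<in> sets (lborel \<Otimes>\<^sub>M lborel)" by measurable
    finally show ?thesis .
  qed
  have \<phi>: "?\<phi> \<in> measurable ?G (lborel \<Otimes>\<^sub>M lborel)"
    by (simp add: gaussian_def measurable_Pair)
  have "measure ?G {x \<in> space ?G. \<bar>dot d r x + c\<bar> \<le> \<bar>\<beta> * dot d r x + dot d w x\<bar>}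
      = measure ?G (?\<phi> -` F \<inter> space ?G)"
    by (rule arg_cong[where f="measure ?G"]) (auto simp: F_def)
  also have "\<dots> = measure (distr ?G (lborel \<Otimes>\<^sub>M lborel) ?\<phi>) F"
    by (rule measure_distr[OF \<phi> F, symmetric])
  also have "\<dots> \<le> 8 * \<bar>\<beta>\<bar> + 4 * (\<bar>\<beta> * dot d r \<mu> + dot d w \<mu>\<bar> + sqrt (bilin d S w w)) / sqrt (bilin d S r r)"
    unfolding distr_gaussian_pair[OF sym pd r w orth] F_def
    by (rule indep_normals_band_prob_le) (use pos_def_bilin_pos[OF pd] r w in auto)
  finally show ?thesis .
qed

lemma band_bound_le_spectral:
  assumes d: "d \<ge> 1" and sym: "symmetric_mat d S" and pd: "pos_def_mat d S"
    and r: "sqnorm d r = 1" and eps: "vnorm d v \<le> \<epsilon>1"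
    and orth: "bilin d S r w = 0" and v: "\<forall>i<d. v i = \<beta> * r i + w i"
  shows "8 * \<bar>\<beta>\<bar> + 4 * (\<bar>\<beta> * dot d r \<mu> + dot d w \<mu>\<bar> + sqrt (bilin d S w w)) / sqrt (bilin d S r r)
     \<le> \<epsilon>1 * (12 * sqrt (lambda_max d S / lambda_min d S) + 4 * vnorm d \<mu> / sqrt (lambda_min d S))"
proof -
  define lmin lmax where "lmin = lambda_min d S" and "lmax = lambda_max d S"
  define s1 s2 where "s1 = bilin d S r r" and "s2 = bilin d S w w"
  have lmin: "0 < lmin" "lmin \<le> lmax"
    unfolding lmin_def lmax_def by (rule lambda_min_pos[OF d sym pd] lambda_min_le_lambda_max[OF d sym])+
  have s1: "lmin \<le> s1"
    using lambda_min_le_bilin[OF d sym, of r] r unfolding lmin_def s1_def by simp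
  have s2: "0 \<le> s2" unfolding s2_def by (rule pos_def_bilin_nonneg[OF pd])
  have e0: "0 \<le> \<epsilon>1" using order_trans[OF real_sqrt_ge_zero[OF sqnorm_nonneg] eps[unfolded vnorm_sqnorm]] .
  have "(sqrt (sqnorm d v))^2 \<le> \<epsilon>1^2" using eps unfolding vnorm_sqnorm by (intro power_mono) auto
  then have "lmax * sqnorm d v \<le> lmax * \<epsilon>1^2" using lmin by (intro mult_left_mono) auto
  with bilin_le_lambda_max[OF d sym, of v] have "bilin d S v v \<le> lmax * \<epsilon>1^2"
    unfolding lmax_def by linarith
  then have "\<beta>^2 * s1 + s2 \<le> lmax * \<epsilon>1^2"
    unfolding bilin_pythagoras[OF sym orth v] s1_def s2_def .
  note main = this
  have lmax: "0 \<le> lmax" using lmin by simp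
  have "\<beta>^2 * lmin \<le> \<beta>^2 * s1" using s1 by (intro mult_left_mono) auto
  also have "\<dots> \<le> lmax * \<epsilon>1^2" using main s2 by linarith
  finally have "\<bar>\<beta>\<bar>^2 \<le> (\<epsilon>1 * (sqrt lmax / sqrt lmin))^2"
    using lmin lmax by (simp add: power_mult_distrib power_divide field_simps)
  then have \<beta>: "\<bar>\<beta>\<bar> \<le> \<epsilon>1 * (sqrt lmax / sqrt lmin)"
    by (rule power2_le_imp_le) (use e0 lmax lmin in simp)
  have "0 \<le> \<beta>^2 * s1" using s1 lmin by simp
  then have "sqrt s2 \<le> sqrt (lmax * \<epsilon>1^2)" using main by (intro real_sqrt_le_mono) linarith
  then have w: "sqrt s2 \<le> \<epsilon>1 * sqrt lmax" using e0 by (simp add: real_sqrt_mult mult.commute)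
  have "\<bar>\<beta> * dot d r \<mu> + dot d w \<mu>\<bar> = \<bar>dot d v \<mu>\<bar>" by (simp add: dot_decomposition[OF v])
  also have "\<dots> \<le> vnorm d v * vnorm d \<mu>" by (rule dot_cauchy_schwarz)
  also have "\<dots> \<le> \<epsilon>1 * vnorm d \<mu>" using eps by (intro mult_right_mono) (auto simp: vnorm_sqnorm)
  finally have "4 * (\<bar>\<beta> * dot d r \<mu> + dot d w \<mu>\<bar> + sqrt s2) / sqrt s1
      \<le> 4 * (\<epsilon>1 * vnorm d \<mu> + \<epsilon>1 * sqrt lmax) / sqrt lmin"
    using w s1 lmin e0 by (intro frac_le) (auto simp: vnorm_sqnorm)
  moreover have "\<epsilon>1 * (12 * (sqrt lmax / sqrt lmin) + 4 * vnorm d \<mu> / sqrt lmin)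
      = 8 * (\<epsilon>1 * (sqrt lmax / sqrt lmin)) + 4 * (\<epsilon>1 * vnorm d \<mu> + \<epsilon>1 * sqrt lmax) / sqrt lmin"
    using lmin by (simp add: field_simps)
  ultimately show ?thesis
    using \<beta> unfolding lmin_def lmax_def s1_def s2_def real_sqrt_divide by linarith
qed

lemma spectral_bound_ge:
  assumes d: "d \<ge> 1" and sym: "symmetric_mat d S" and pd: "pos_def_mat d S" and e0: "0 \<le> \<epsilon>1"
  shows "12 * \<epsilon>1 \<le> \<epsilon>1 * (12 * sqrt (lambda_max d S / lambda_min d S) + 4 * vnorm d \<mu> / sqrt (lambda_min d S))"
proof -
  have "1 \<le> sqrt (lambda_max d S / lambda_min d S)"
    using lambda_min_pos[OF d sym pd] lambda_min_le_lambda_max[OF d sym] by simp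
  moreover have "0 \<le> 4 * vnorm d \<mu> / sqrt (lambda_min d S)"
    using lambda_min_pos[OF d sym pd] by (simp add: vnorm_sqnorm)
  ultimately have "12 \<le> 12 * sqrt (lambda_max d S / lambda_min d S) + 4 * vnorm d \<mu> / sqrt (lambda_min d S)"
    by linarith
  from mult_left_mono[OF this e0] show ?thesis by (simp add: mult.commute)
qed

lemma gaussian_disagreement_prob_le:
  assumes d: "d \<ge> 1" and sym: "symmetric_mat d S" and pd: "pos_def_mat d S"
    and r: "vnorm d r = 1" and rh: "vnorm d rh = 1" and eps: "vnorm d (\<lambda>i. r i - rh i) \<le> \<epsilon>1"
  shows "measure (gaussian d \<mu> S)
        {x \<in> space (gaussian d \<mu> S). pos (dot d r x + c) \<noteq> pos (dot d rh x + c)}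
     \<le> \<epsilon>1 * (12 * sqrt (lambda_max d S / lambda_min d S) + 4 * vnorm d \<mu> / sqrt (lambda_min d S))"
    (is "measure ?G ?E \<le> ?R")
proof -
  interpret prob_space ?G by (rule prob_space_gaussian[OF sym pd])
  define v where "v = (\<lambda>i. r i - rh i)"
  have e0: "0 \<le> \<epsilon>1" using order_trans[OF real_sqrt_ge_zero[OF sqnorm_nonneg] eps[unfolded vnorm_sqnorm]] .
  have r1: "sqnorm d r = 1" and rh1: "sqnorm d rh = 1" using r rh unfolding vnorm_sqnorm by simp_all
  have r0: "\<exists>i<d. r i \<noteq> 0" using r1 sqnorm_pos_iff[of d r] by simp
  obtain \<beta> w where orth: "bilin d S r w = 0" and vw: "\<forall>i<d. v i = \<beta> * r i + w i"
    using bilin_orthogonal_decomposition pos_def_bilin_pos[OF pd r0] by (metis less_irrefl)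
  show ?thesis
  proof (cases "\<exists>i<d. w i \<noteq> 0")
    case True
    let ?B = "{x \<in> space ?G. \<bar>dot d r x + c\<bar> \<le> \<bar>\<beta> * dot d r x + dot d w x\<bar>}"
    have "?E \<subseteq> ?B"
      using disagreement_subset_band[of "space ?G" d r c rh] by (simp add: dot_decomposition[OF vw[unfolded v_def]])
    moreover have "?B \<in> sets ?G" by (simp add: gaussian_def)
    ultimately have "measure ?G ?E \<le> measure ?G ?B" by (rule finite_measure_mono)
    also have "\<dots> \<le> 8 * \<bar>\<beta>\<bar> + 4 * (\<bar>\<beta> * dot d r \<mu> + dot d w \<mu>\<bar> + sqrt (bilin d S w w)) / sqrt (bilin d S r r)"
      by (rule gaussian_band_prob_le[OF sym pd r0 True orth])
    also have "\<dots> \<le> ?R" by (rule band_bound_le_spectral[OF d sym pd r1 eps[folded v_def] orth vw])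
    finally show ?thesis .
  next
    case False
    then have "\<forall>i<d. r i - rh i = \<beta> * r i" using vw unfolding v_def by auto
    then consider "\<forall>i<d. r i = rh i" | "\<forall>i<d. r i - rh i = 2 * r i"
      using unit_vectors_multiple_cases[OF r1 rh1] by fastforce
    then show ?thesis
    proof cases
      case 1
      then have "?E = {}" using dot_cong[of d r rh] by auto
      then have "measure ?G ?E = 0" by (simp only: measure_empty)
      then show ?thesis using spectral_bound_ge[OF d sym pd e0, of \<mu>] e0 by linarith
    next
      case 2
      then have "2 \<le> \<epsilon>1" using vnorm_opposite_unit[OF r1 2] eps by simp
      then have "measure ?G ?E \<le> 12 * \<epsilon>1" using prob_le_1[of ?E] by linarith
      also have "\<dots> \<le> ?R" by (rule spectral_bound_ge[OF d sym pd e0])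
      finally show ?thesis .
    qed
  qed
qed

theorem lemma2:
  shows "\<exists>c0>0. \<exists>c1>0. \<forall>(d::nat) (\<mu>::nat \<Rightarrow> real) (\<Sigma>::nat \<Rightarrow> nat \<Rightarrow> real)
            (c::real) (r::nat \<Rightarrow> real) (rh::nat \<Rightarrow> real) (\<epsilon>1::real).
     d \<ge> 1 \<longrightarrow> symmetric_mat d \<Sigma> \<longrightarrow> pos_def_mat d \<Sigma> \<longrightarrow>
     vnorm d r = 1 \<longrightarrow> vnorm d rh = 1 \<longrightarrow>
     vnorm d (\<lambda>i. r i - rh i) \<le> \<epsilon>1 \<longrightarrow>
     measure (gaussian d \<mu> \<Sigma>)
        {x \<in> space (gaussian d \<mu> \<Sigma>). pos (dot d r x + c) \<noteq> pos (dot d rh x + c)}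
     \<le> \<epsilon>1 * (c0 * sqrt (lambda_max d \<Sigma> / lambda_min d \<Sigma>)
               + c1 * vnorm d \<mu> / sqrt (lambda_min d \<Sigma>))"
  by (intro exI[of _ "12::real"] exI[of _ "4::real"] conjI allI impI gaussian_disagreement_prob_le)
    simp_all

end
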